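(* Let $\alpha>0$ and let $\omega:[0,1]\to\mathbb R$ be a function that is continuous on $[0,1]$, nondecreasing, satisfies $\omega(\delta)\ne0$ for all $\delta\in(0,1]$ and $\omega(\delta)\to0$ as $\delta\to0+$, and satisfies condition $(\mathcal B_\alpha)$: $\sum_{v=1}^n v^{\alpha-1}\omega(v^{-1})=\mathcal O(n^\alpha\omega(n^{-1}))$ as $n\to\infty$. Let $\|\cdot\|$ be either the Luxemburg norm $\|\cdot\|_{\mathbf M}$ or the Orlicz norm $\|\cdot\|^*_{\mathbf M}$ (the same choice throughout). Then a function $f\in\mathcal S_{\mathbf M}$ satisfies $\omega_\alpha(f,\delta)=\mathcal O(\omega(\delta))$ as $\delta\to0+$ if and only if $E_n(f)=\mathcal O(\omega(n^{-1}))$ as $n\to\infty$.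
   Context: $L$ is the space of $2\pi$-periodic Lebesgue integrable functions, with Fourier coefficients $\widehat f(k)=(2\pi)^{-1}\int_0^{2\pi}f(x)e^{-\mathrm{i}kx}\,dx$. Let $\mathbf M=\{M_k\}_{k\in\mathbb Z}$ be a sequence of Orlicz functions on $[0,\infty)$ (nondecreasing, convex, $M_k(0)=0$, $M_k(u)\to\infty$ as $u\to\infty$). For a complex sequence $c=\{c_k\}_{k\in\mathbb Z}$: Luxemburg norm $\|c\|_{\mathbf M}=\inf\{a>0:\sum_kM_k(|c_k|/a)\le1\}$; with $\tilde M_k(v)=\sup\{uv-M_k(u):u\ge0\}$ and $\Lambda$ the set of positive sequences $\lambda$ with $\sum_k\tilde M_k(\lambda_k)\le1$, Orlicz norm $\|c\|^*_{\mathbf M}=\sup\{\sum_k\lambda_k|c_k|:\lambda\in\Lambda\}$. $\mathcal S_{\mathbf M}$ is the space of $f\in L$ with $\|\{\widehat f(k)\}\|_{\mathbf M}<\infty$; norms of $f$ are those of $\{\widehat f(k)\}$. $E_n(f)=\inf\{\|f-t\|:t\in\mathcal T_{n-1}\}$, $\mathcal T_{n-1}$ the trigonometric polynomials $\sum_{|k|\le n-1}c_ke^{\mathrm{i}kx}$. For $\alpha>0$, $\Delta_h^\alpha f(x)=\sum_{j\ge0}(-1)^j\binom{\alpha}{j}f(x-jh)$, with Fourier coefficients $(1-e^{-\mathrm{i}kh})^\alpha\widehat f(k)$, and $\omega_\alpha(f,\delta)=\sup_{|h|\le\delta}\|\Delta_h^\alpha f\|$. *)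

theory Defs
  imports "HOL-Analysis.Analysis" "HOL-Library.Landau_Symbols"
begin

definition Lper :: "(real \<Rightarrow> complex) set" where
  "Lper = {f. (\<forall>x. f (x + 2 * pi) = f x) \<and> f absolutely_integrable_on {0..2 * pi}}"

definition fourier_coeff :: "(real \<Rightarrow> complex) \<Rightarrow> int \<Rightarrow> complex" where
  "fourier_coeff f k =
     complex_of_real (1 / (2 * pi)) * integral {0..2 * pi} (\<lambda>x. f x * cis (- (of_int k * x)))"

definition orlicz_function :: "(real \<Rightarrow> real) \<Rightarrow> bool" where
  "orlicz_function M \<longleftrightarrow> mono_on {0..} M \<and> convex_on {0..} M \<and> M 0 = 0
     \<and> filterlim M at_top at_top"

text \<open>Luxemburg norm (value \<infinity> if no admissible a exists).\<close>
definition lux_norm :: "(int \<Rightarrow> real \<Rightarrow> real) \<Rightarrow> (int \<Rightarrow> complex) \<Rightarrow> ennreal" where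
  "lux_norm Ms c = Inf {ennreal a | a. a > 0 \<and>
      (\<Sum>\<^sub>\<infinity>k. ennreal (Ms k (norm (c k) / a))) \<le> 1}"

definition compl_fun :: "(real \<Rightarrow> real) \<Rightarrow> real \<Rightarrow> ennreal" where
  "compl_fun M v = (SUP u\<in>{0..}. ennreal (u * v - M u))"

definition Lambda_set :: "(int \<Rightarrow> real \<Rightarrow> real) \<Rightarrow> (int \<Rightarrow> real) set" where
  "Lambda_set Ms = {lam. (\<forall>k. lam k > 0) \<and> (\<Sum>\<^sub>\<infinity>k. compl_fun (Ms k) (lam k)) \<le> 1}"

definition orlicz_norm :: "(int \<Rightarrow> real \<Rightarrow> real) \<Rightarrow> (int \<Rightarrow> complex) \<Rightarrow> ennreal" where
  "orlicz_norm Ms c = (SUP lam\<in>Lambda_set Ms. (\<Sum>\<^sub>\<infinity>k. ennreal (lam k * norm (c k))))"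

definition S_M :: "(int \<Rightarrow> real \<Rightarrow> real) \<Rightarrow> (real \<Rightarrow> complex) set" where
  "S_M Ms = {f \<in> Lper. lux_norm Ms (fourier_coeff f) < \<infinity>}"

definition trig_polys :: "int \<Rightarrow> (real \<Rightarrow> complex) set" where
  "trig_polys m = {t. \<exists>c. \<forall>x. t x = (\<Sum>k\<in>{-m..m}. c k * cis (of_int k * x))}"

definition best_approx ::
  "((int \<Rightarrow> complex) \<Rightarrow> ennreal) \<Rightarrow> nat \<Rightarrow> (real \<Rightarrow> complex) \<Rightarrow> ennreal" where
  "best_approx N n f = Inf {N (fourier_coeff (\<lambda>x. f x - t x)) | t. t \<in> trig_polys (int n - 1)}"

definition frac_diff :: "real \<Rightarrow> real \<Rightarrow> (real \<Rightarrow> complex) \<Rightarrow> real \<Rightarrow> complex" where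
  "frac_diff \<alpha> h f x =
     (\<Sum>j. complex_of_real ((-1) ^ j * (\<alpha> gchoose j)) * f (x - real j * h))"

definition modulus_smooth ::
  "((int \<Rightarrow> complex) \<Rightarrow> ennreal) \<Rightarrow> real \<Rightarrow> (real \<Rightarrow> complex) \<Rightarrow> real \<Rightarrow> ennreal" where
  "modulus_smooth N \<alpha> f \<delta> = (SUP h\<in>{h. \<bar>h\<bar> \<le> \<delta>}. N (fourier_coeff (frac_diff \<alpha> h f)))"

end

theory Submission
  imports Defs
begin

text \<open>Everything is transferred to the Fourier coefficients \<open>c\<^sub>k\<close> of \<open>f\<close>, in which both norms
  are monotone. Thus \<open>E\<^sub>n(f)\<close> is the norm of the tail of \<open>c\<close> on \<open>|k| \<ge> n\<close>, and, since the binomial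
  series of \<open>(1 - z)\<^sup>\<alpha>\<close> converges absolutely on the unit circle (Abel's theorem), \<open>\<omega>\<^sub>\<alpha>(f, \<delta>)\<close>
  is the supremum over \<open>|h| \<le> \<delta>\<close> of the norms of the sequences \<open>|2 sin (k h / 2)|\<^sup>\<alpha> c\<^sub>k\<close>.

  Bernstein direction: \<open>|2 sin (k h / 2)|\<^sup>\<alpha> \<le> min 2\<^sup>\<alpha> |k h|\<^sup>\<alpha>\<close>, and \<open>|k|\<^sup>\<alpha>\<close> is the telescoping
  sum of the increments \<open>(v + 1)\<^sup>\<alpha> - v\<^sup>\<alpha>\<close> over \<open>v < |k|\<close>, so the multiplied sequence is dominated
  by a weighted sum of tails; with \<open>n \<approx> 1/\<delta>\<close>, the triangle inequality and \<open>(B\<^sub>\<alpha>)\<close> bound its norm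
  by \<open>C \<omega>(1/n) \<le> C \<omega>(\<delta>)\<close>.

  Jackson direction: for \<open>|k| \<ge> n\<close> the mean of \<open>sin\<^sup>2(k h / 2)\<close> over \<open>h \<in> [0, 1/n]\<close> is at least
  \<open>(1 - sin 1)/4\<close>. Averaging over these \<open>h\<close> the Luxemburg modular (resp. the pairings with
  \<open>\<lambda> \<in> \<Lambda>\<close>) of the multiplied sequences therefore dominates that of a fixed multiple of the tail.\<close>

lemma ennreal_infsum_eq_SUP:
  "(\<Sum>\<^sub>\<infinity>k\<in>A. (f k :: ennreal)) = (SUP F\<in>{F. finite F \<and> F \<subseteq> A}. sum f F)"
  by (rule nonneg_infsum_complete) simp

lemma ennreal_infsum_le_iff:
  "(\<Sum>\<^sub>\<infinity>k. (f k :: ennreal)) \<le> B \<longleftrightarrow> (\<forall>F. finite F \<longrightarrow> sum f F \<le> B)"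
  unfolding ennreal_infsum_eq_SUP by (auto simp: SUP_le_iff)

lemma ennreal_sum_le_infsum: "finite F \<Longrightarrow> sum f F \<le> (\<Sum>\<^sub>\<infinity>k. (f k :: ennreal))"
  using ennreal_infsum_le_iff[of f "\<Sum>\<^sub>\<infinity>k. f k"] by auto

lemma ennreal_infsum_mono:
  "(\<And>k. f k \<le> g k) \<Longrightarrow> (\<Sum>\<^sub>\<infinity>k. (f k :: ennreal)) \<le> (\<Sum>\<^sub>\<infinity>k. g k)"
  by (rule infsum_mono) (auto intro: nonneg_summable_on_complete)

lemma ennreal_infsum_add:
  "(\<Sum>\<^sub>\<infinity>k. (f k + g k :: ennreal)) = (\<Sum>\<^sub>\<infinity>k. f k) + (\<Sum>\<^sub>\<infinity>k. g k)"
  by (rule infsum_add) (auto intro: nonneg_summable_on_complete)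

lemma ennreal_infsum_cmult: "(\<Sum>\<^sub>\<infinity>k. (c * f k :: ennreal)) = c * (\<Sum>\<^sub>\<infinity>k. f k)"
  unfolding ennreal_infsum_eq_SUP SUP_mult_left_ennreal by (simp add: sum_distrib_left)

lemma ennreal_le_add_by_upper_bounds:
  assumes "\<And>a b. x < ennreal a \<Longrightarrow> y < ennreal b \<Longrightarrow> z \<le> ennreal (a + b)"
  shows "z \<le> x + y"
proof (cases "x = \<infinity> \<or> y = \<infinity>")
  case True
  then show ?thesis by auto
next
  case False
  then obtain x' y' where xy: "x = ennreal x'" "y = ennreal y'" "x' \<ge> 0" "y' \<ge> 0"
    by (metis ennreal_cases infinity_ennreal_def)
  show ?thesis
  proof (rule ennreal_le_epsilon)
    fix e :: real assume e: "0 < e"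
    have "z \<le> ennreal ((x' + e/2) + (y' + e/2))"
      by (rule assms) (use xy e in \<open>auto simp: ennreal_less_iff\<close>)
    also have "\<dots> = x + y + ennreal e" using xy e by (simp flip: ennreal_plus)
    finally show "z \<le> x + y + ennreal e" .
  qed
qed

lemma ennreal_le_mult_by_upper_bounds:
  assumes "\<And>a. x < ennreal a \<Longrightarrow> z \<le> ennreal (r * a)" and r: "r > 0"
  shows "z \<le> ennreal r * x"
proof (cases "x = \<infinity>")
  case True
  then show ?thesis using r by (simp add: ennreal_mult_top)
next
  case False
  then obtain x' where xy: "x = ennreal x'" "x' \<ge> 0"
    by (metis ennreal_cases infinity_ennreal_def)
  show ?thesis
  proof (rule ennreal_le_epsilon)
    fix e :: real assume e: "0 < e"
    have "z \<le> ennreal (r * (x' + e / (r + 1)))"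
      by (rule assms) (use xy e r in \<open>auto simp: ennreal_less_iff\<close>)
    also have "\<dots> \<le> ennreal (r * x' + e)"
    proof -
      have "r * (e / (r + 1)) \<le> e" using r e by (simp add: field_simps)
      then show ?thesis by (intro ennreal_leI) (simp add: algebra_simps)
    qed
    also have "\<dots> = ennreal r * x + ennreal e"
      using xy e r by (simp add: ennreal_mult ennreal_plus[symmetric])
    finally show "z \<le> ennreal r * x + ennreal e" .
  qed
qed

section \<open>Luxemburg and Orlicz norms of sequences\<close>

lemma orlicz_function_nonneg: "orlicz_function M \<Longrightarrow> 0 \<le> u \<Longrightarrow> 0 \<le> M u"
  unfolding orlicz_function_def mono_on_def by (metis atLeast_iff order_refl)

lemma orlicz_function_mono: "orlicz_function M \<Longrightarrow> 0 \<le> u \<Longrightarrow> u \<le> v \<Longrightarrow> M u \<le> M v"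
  unfolding orlicz_function_def mono_on_def by (metis atLeast_iff order_trans)

lemma orlicz_function_convex:
  "orlicz_function M \<Longrightarrow> 0 \<le> t \<Longrightarrow> t \<le> 1 \<Longrightarrow> 0 \<le> u \<Longrightarrow> 0 \<le> v \<Longrightarrow>
   M ((1 - t) * u + t * v) \<le> (1 - t) * M u + t * M v"
  unfolding orlicz_function_def using convex_onD[of "{0..}" M t u v] by auto

lemma orlicz_function_scale_le:
  "orlicz_function M \<Longrightarrow> 0 \<le> t \<Longrightarrow> t \<le> 1 \<Longrightarrow> 0 \<le> u \<Longrightarrow> M (t * u) \<le> t * M u"
  using orlicz_function_convex[of M t 0 u] unfolding orlicz_function_def by auto

definition lux_admissible :: "(int \<Rightarrow> real \<Rightarrow> real) \<Rightarrow> (int \<Rightarrow> complex) \<Rightarrow> real \<Rightarrow> bool" where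
  "lux_admissible Ms c a \<longleftrightarrow> a > 0 \<and> (\<Sum>\<^sub>\<infinity>k. ennreal (Ms k (norm (c k) / a))) \<le> 1"

lemma lux_norm_eq_Inf_admissible: "lux_norm Ms c = Inf {ennreal a | a. lux_admissible Ms c a}"
  unfolding lux_norm_def lux_admissible_def by simp

lemma lux_norm_le_admissible: "lux_admissible Ms c a \<Longrightarrow> lux_norm Ms c \<le> ennreal a"
  unfolding lux_norm_eq_Inf_admissible by (auto intro: Inf_lower)

lemma lux_admissible_mono:
  assumes orl: "\<And>k. orlicz_function (Ms k)" and le: "\<And>k. norm (c k) \<le> norm (d k)"
    and adm: "lux_admissible Ms d b" and ba: "b \<le> a"
  shows "lux_admissible Ms c a"
proof -
  have b: "b > 0" using adm by (simp add: lux_admissible_def)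
  have "ennreal (Ms k (norm (c k) / a)) \<le> ennreal (Ms k (norm (d k) / b))" for k
  proof -
    have "norm (c k) / a \<le> norm (d k) / b"
      using le[of k] b ba by (meson frac_le norm_ge_zero order_trans)
    then show ?thesis using orlicz_function_mono[OF orl] b ba by (simp add: ennreal_leI)
  qed
  then have "(\<Sum>\<^sub>\<infinity>k. ennreal (Ms k (norm (c k) / a))) \<le> (\<Sum>\<^sub>\<infinity>k. ennreal (Ms k (norm (d k) / b)))"
    by (rule ennreal_infsum_mono)
  then show ?thesis using adm b ba unfolding lux_admissible_def by auto
qed

lemma lux_admissible_if_less:
  assumes orl: "\<And>k. orlicz_function (Ms k)" and less: "lux_norm Ms c < ennreal a"
  shows "lux_admissible Ms c a"
proof -
  from less obtain b where b: "lux_admissible Ms c b" "ennreal b < ennreal a"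
    unfolding lux_norm_eq_Inf_admissible Inf_less_iff by blast
  then have "b \<le> a" using ennreal_less_iff[of b a] by (auto simp: lux_admissible_def)
  then show ?thesis using lux_admissible_mono[OF orl _ b(1)] by auto
qed

lemma lux_norm_mono:
  assumes orl: "\<And>k. orlicz_function (Ms k)" and le: "\<And>k. norm (c k) \<le> norm (d k)"
  shows "lux_norm Ms c \<le> lux_norm Ms d"
  unfolding lux_norm_eq_Inf_admissible
  by (rule Inf_superset_mono) (use lux_admissible_mono[OF orl le] in fastforce)

lemma lux_admissible_add:
  assumes orl: "\<And>k. orlicz_function (Ms k)"
    and adm_c: "lux_admissible Ms c a" and adm_d: "lux_admissible Ms d b"
  shows "lux_admissible Ms (\<lambda>k. c k + d k) (a + b)"
proof -
  have a: "a > 0" and b: "b > 0" using adm_c adm_d by (auto simp: lux_admissible_def)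
  define t where "t = b / (a + b)"
  have t: "0 \<le> t" "t \<le> 1" "1 - t = a / (a + b)" using a b by (auto simp: t_def field_simps)
  have convex: "ennreal (Ms k (norm (c k + d k) / (a + b))) \<le>
      ennreal (1 - t) * ennreal (Ms k (norm (c k) / a)) + ennreal t * ennreal (Ms k (norm (d k) / b))"
    for k
  proof -
    have "norm (c k + d k) / (a + b) \<le> (norm (c k) + norm (d k)) / (a + b)"
      using a b norm_triangle_ineq[of "c k" "d k"] by (intro divide_right_mono) auto
    also have "\<dots> = (1 - t) * (norm (c k) / a) + t * (norm (d k) / b)"
    proof -
      have c: "a / (a + b) * (norm (c k) / a) = norm (c k) / (a + b)" using a by simp
      have d: "t * (norm (d k) / b) = norm (d k) / (a + b)" using b by (simp add: t_def)
      show ?thesis by (simp only: t(3) c d add_divide_distrib)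
    qed
    finally have "Ms k (norm (c k + d k) / (a + b)) \<le> Ms k ((1 - t) * (norm (c k) / a) + t * (norm (d k) / b))"
      using orlicz_function_mono[OF orl] a b by simp
    also have "\<dots> \<le> (1 - t) * Ms k (norm (c k) / a) + t * Ms k (norm (d k) / b)"
      by (rule orlicz_function_convex[OF orl]) (use t a b in auto)
    finally show ?thesis using t orlicz_function_nonneg[OF orl] a b
      by (simp add: ennreal_leI flip: ennreal_mult ennreal_plus)
  qed
  have "(\<Sum>\<^sub>\<infinity>k. ennreal (Ms k (norm (c k + d k) / (a + b)))) \<le>
      ennreal (1 - t) * (\<Sum>\<^sub>\<infinity>k. ennreal (Ms k (norm (c k) / a))) +
      ennreal t * (\<Sum>\<^sub>\<infinity>k. ennreal (Ms k (norm (d k) / b)))"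
    using ennreal_infsum_mono[OF convex] by (simp add: ennreal_infsum_add ennreal_infsum_cmult)
  also have "\<dots> \<le> ennreal (1 - t) * 1 + ennreal t * 1"
    using adm_c adm_d unfolding lux_admissible_def by (intro add_mono mult_left_mono) auto
  also have "\<dots> = 1" using t by (simp flip: ennreal_plus)
  finally show ?thesis using a b by (simp add: lux_admissible_def)
qed

lemma lux_norm_triangle:
  assumes orl: "\<And>k. orlicz_function (Ms k)"
  shows "lux_norm Ms (\<lambda>k. c k + d k) \<le> lux_norm Ms c + lux_norm Ms d"
proof (rule ennreal_le_add_by_upper_bounds)
  fix a b assume "lux_norm Ms c < ennreal a" "lux_norm Ms d < ennreal b"
  then show "lux_norm Ms (\<lambda>k. c k + d k) \<le> ennreal (a + b)"
    by (intro lux_norm_le_admissible lux_admissible_add[OF orl] lux_admissible_if_less[OF orl])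
qed

lemma lux_norm_scale_le:
  assumes orl: "\<And>k. orlicz_function (Ms k)" and r: "r > 0"
  shows "lux_norm Ms (\<lambda>k. of_real r * c k) \<le> ennreal r * lux_norm Ms c"
proof (rule ennreal_le_mult_by_upper_bounds)
  fix a assume "lux_norm Ms c < ennreal a"
  then have "lux_admissible Ms c a" by (rule lux_admissible_if_less[OF orl])
  then have "lux_admissible Ms (\<lambda>k. of_real r * c k) (r * a)"
    using r by (simp add: lux_admissible_def norm_mult)
  then show "lux_norm Ms (\<lambda>k. of_real r * c k) \<le> ennreal (r * a)" by (rule lux_norm_le_admissible)
qed (use r in auto)

lemma lux_norm_zero:
  assumes orl: "\<And>k. orlicz_function (Ms k)"
  shows "lux_norm Ms (\<lambda>k. 0) = 0"
proof -
  have adm: "lux_admissible Ms (\<lambda>k. 0) a" if "a > 0" for a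
    using that orl unfolding lux_admissible_def orlicz_function_def by simp
  have "lux_norm Ms (\<lambda>k. 0) \<le> 0"
    by (rule ennreal_le_epsilon) (use lux_norm_le_admissible adm in auto)
  then show ?thesis by simp
qed

lemma orlicz_norm_mono:
  assumes le: "\<And>k. norm (c k) \<le> norm (d k)"
  shows "orlicz_norm Ms c \<le> orlicz_norm Ms d"
  unfolding orlicz_norm_def
proof (rule SUP_subset_mono[OF order_refl])
  fix lam assume "lam \<in> Lambda_set Ms"
  then have "lam k > 0" for k by (simp add: Lambda_set_def)
  then show "(\<Sum>\<^sub>\<infinity>k. ennreal (lam k * norm (c k))) \<le> (\<Sum>\<^sub>\<infinity>k. ennreal (lam k * norm (d k)))"
    by (intro ennreal_infsum_mono ennreal_leI mult_left_mono le) (auto simp: less_imp_le)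
qed

lemma orlicz_norm_triangle: "orlicz_norm Ms (\<lambda>k. c k + d k) \<le> orlicz_norm Ms c + orlicz_norm Ms d"
  unfolding orlicz_norm_def
proof (rule SUP_least)
  fix lam assume lam: "lam \<in> Lambda_set Ms"
  then have lam_pos: "lam k > 0" for k by (simp add: Lambda_set_def)
  have "ennreal (lam k * norm (c k + d k)) \<le> ennreal (lam k * norm (c k)) + ennreal (lam k * norm (d k))"
    for k
  proof -
    have "lam k * norm (c k + d k) \<le> lam k * norm (c k) + lam k * norm (d k)"
      using lam_pos[of k] norm_triangle_ineq[of "c k" "d k"]
      by (simp add: less_imp_le flip: distrib_left)
    then show ?thesis using lam_pos[of k] by (simp add: ennreal_leI less_imp_le flip: ennreal_plus)
  qed
  then have "(\<Sum>\<^sub>\<infinity>k. ennreal (lam k * norm (c k + d k))) \<le>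
        (\<Sum>\<^sub>\<infinity>k. ennreal (lam k * norm (c k))) + (\<Sum>\<^sub>\<infinity>k. ennreal (lam k * norm (d k)))"
    unfolding ennreal_infsum_add[symmetric] by (rule ennreal_infsum_mono)
  also have "\<dots> \<le> (SUP lam\<in>Lambda_set Ms. \<Sum>\<^sub>\<infinity>k. ennreal (lam k * norm (c k))) +
                   (SUP lam\<in>Lambda_set Ms. \<Sum>\<^sub>\<infinity>k. ennreal (lam k * norm (d k)))"
    using lam by (intro add_mono SUP_upper)
  finally show "(\<Sum>\<^sub>\<infinity>k. ennreal (lam k * norm (c k + d k))) \<le> \<dots>" .
qed

lemma orlicz_norm_scale_le:
  assumes r: "r > 0"
  shows "orlicz_norm Ms (\<lambda>k. of_real r * c k) \<le> ennreal r * orlicz_norm Ms c"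
  unfolding orlicz_norm_def
proof (rule SUP_least)
  fix lam assume lam: "lam \<in> Lambda_set Ms"
  then have lam_pos: "lam k > 0" for k by (simp add: Lambda_set_def)
  have "(\<Sum>\<^sub>\<infinity>k. ennreal (lam k * norm (of_real r * c k))) = (\<Sum>\<^sub>\<infinity>k. ennreal r * ennreal (lam k * norm (c k)))"
    using lam_pos r by (intro infsum_cong) (simp add: norm_mult less_imp_le mult_ac flip: ennreal_mult)
  also have "\<dots> = ennreal r * (\<Sum>\<^sub>\<infinity>k. ennreal (lam k * norm (c k)))" by (rule ennreal_infsum_cmult)
  also have "\<dots> \<le> ennreal r * (SUP lam\<in>Lambda_set Ms. \<Sum>\<^sub>\<infinity>k. ennreal (lam k * norm (c k)))"
    using lam by (intro mult_left_mono SUP_upper) auto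
  finally show "(\<Sum>\<^sub>\<infinity>k. ennreal (lam k * norm (of_real r * c k))) \<le> \<dots>" .
qed

lemma orlicz_norm_zero: "orlicz_norm Ms (\<lambda>k. 0) = 0"
  unfolding orlicz_norm_def by (cases "Lambda_set Ms = {}") (auto simp: bot_ennreal)

lemma young_inequality_compl_fun:
  assumes M: "orlicz_function M" and u: "u \<ge> 0"
  shows "ennreal (u * v) \<le> ennreal (M u) + compl_fun M v"
proof -
  have "ennreal (u * v - M u) \<le> compl_fun M v"
    unfolding compl_fun_def using u by (intro SUP_upper) auto
  moreover have "ennreal (u * v) \<le> ennreal (M u) + ennreal (u * v - M u)"
  proof (cases "u * v - M u \<ge> 0")
    case True
    then show ?thesis using orlicz_function_nonneg[OF M u] by (simp flip: ennreal_plus)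
  next
    case False
    then have "ennreal (u * v) \<le> ennreal (M u)" by (intro ennreal_leI) simp
    then show ?thesis by (simp add: add_increasing2)
  qed
  ultimately show ?thesis by (meson add_left_mono order_trans)
qed

lemma orlicz_norm_le_admissible:
  assumes orl: "\<And>k. orlicz_function (Ms k)" and adm: "lux_admissible Ms c a"
  shows "orlicz_norm Ms c \<le> ennreal (2 * a)"
  unfolding orlicz_norm_def
proof (rule SUP_least)
  fix lam assume lam: "lam \<in> Lambda_set Ms"
  then have lam_pos: "lam k > 0" for k by (simp add: Lambda_set_def)
  have a: "a > 0" using adm by (simp add: lux_admissible_def)
  have young: "ennreal (lam k * norm (c k)) \<le>
      ennreal a * (ennreal (Ms k (norm (c k) / a)) + compl_fun (Ms k) (lam k))" for k
  proof -
    have "ennreal (lam k * norm (c k)) = ennreal a * ennreal ((norm (c k) / a) * lam k)"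
      using a lam_pos[of k] by (simp add: less_imp_le flip: ennreal_mult)
    also have "\<dots> \<le> ennreal a * (ennreal (Ms k (norm (c k) / a)) + compl_fun (Ms k) (lam k))"
      using a by (intro mult_left_mono young_inequality_compl_fun[OF orl]) auto
    finally show ?thesis .
  qed
  have "(\<Sum>\<^sub>\<infinity>k. ennreal (lam k * norm (c k))) \<le>
      (\<Sum>\<^sub>\<infinity>k. ennreal a * (ennreal (Ms k (norm (c k) / a)) + compl_fun (Ms k) (lam k)))"
    by (rule ennreal_infsum_mono[OF young])
  also have "\<dots> = ennreal a * ((\<Sum>\<^sub>\<infinity>k. ennreal (Ms k (norm (c k) / a))) +
      (\<Sum>\<^sub>\<infinity>k. compl_fun (Ms k) (lam k)))"
    by (simp add: ennreal_infsum_cmult ennreal_infsum_add)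
  also have "\<dots> \<le> ennreal a * (1 + 1)"
    using adm lam unfolding lux_admissible_def Lambda_set_def by (intro mult_left_mono add_mono) auto
  also have "\<dots> = ennreal (2 * a)" using a by (simp add: ennreal_mult mult.commute)
  finally show "(\<Sum>\<^sub>\<infinity>k. ennreal (lam k * norm (c k))) \<le> ennreal (2 * a)" .
qed

lemma orlicz_norm_le_lux_norm:
  assumes orl: "\<And>k. orlicz_function (Ms k)"
  shows "orlicz_norm Ms c \<le> ennreal 2 * lux_norm Ms c"
  by (rule ennreal_le_mult_by_upper_bounds)
     (use orlicz_norm_le_admissible[OF orl] lux_admissible_if_less[OF orl] in auto)

section \<open>Lattice norms on sequences\<close>

locale seq_lattice_norm =
  fixes N :: "(int \<Rightarrow> complex) \<Rightarrow> ennreal"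
  assumes mono: "(\<And>k. norm (c k) \<le> norm (d k)) \<Longrightarrow> N c \<le> N d"
    and triangle: "N (\<lambda>k. c k + d k) \<le> N c + N d"
    and scale_le: "r > 0 \<Longrightarrow> N (\<lambda>k. of_real r * c k) \<le> ennreal r * N c"
    and zero: "N (\<lambda>k. 0) = 0"
begin

lemma cong: "(\<And>k. norm (c k) = norm (d k)) \<Longrightarrow> N c = N d"
  by (metis mono order.antisym order_refl)

lemma scale_nonneg_le:
  assumes r: "r \<ge> 0"
  shows "N (\<lambda>k. of_real r * c k) \<le> ennreal r * N c"
proof (cases "r = 0")
  case True
  then show ?thesis using mono[of "\<lambda>k. of_real r * c k" "\<lambda>k. 0"] zero by simp
next
  case False
  then show ?thesis using r scale_le by simp
qed

lemma sum_le:
  assumes "finite V" and "\<And>v. v \<in> V \<Longrightarrow> r v \<ge> 0"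
  shows "N (\<lambda>k. \<Sum>v\<in>V. of_real (r v) * d v k) \<le> (\<Sum>v\<in>V. ennreal (r v) * N (d v))"
  using assms
proof (induction V rule: finite_induct)
  case empty
  then show ?case using zero by simp
next
  case (insert x F)
  have "N (\<lambda>k. \<Sum>v\<in>insert x F. of_real (r v) * d v k) =
      N (\<lambda>k. of_real (r x) * d x k + (\<Sum>v\<in>F. of_real (r v) * d v k))"
    using insert by simp
  also have "\<dots> \<le> N (\<lambda>k. of_real (r x) * d x k) + N (\<lambda>k. \<Sum>v\<in>F. of_real (r v) * d v k)"
    by (rule triangle)
  also have "\<dots> \<le> ennreal (r x) * N (d x) + (\<Sum>v\<in>F. ennreal (r v) * N (d v))"
    using insert by (intro add_mono scale_nonneg_le) auto
  finally show ?case using insert by simp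
qed

end

lemma seq_lattice_norm_lux_norm:
  "(\<And>k. orlicz_function (Ms k)) \<Longrightarrow> seq_lattice_norm (lux_norm Ms)"
  by unfold_locales (simp_all add: lux_norm_mono lux_norm_triangle lux_norm_scale_le lux_norm_zero)

lemma seq_lattice_norm_orlicz_norm: "seq_lattice_norm (orlicz_norm Ms)"
  by unfold_locales (simp_all add: orlicz_norm_mono orlicz_norm_triangle orlicz_norm_scale_le orlicz_norm_zero)

section \<open>Tails, multipliers and the Jackson direction\<close>

definition tail_seq :: "nat \<Rightarrow> (int \<Rightarrow> complex) \<Rightarrow> int \<Rightarrow> complex" where
  "tail_seq n c k = (if n \<le> \<bar>k\<bar> then c k else 0)"

text \<open>The modulus of \<open>(1 - e\<^sup>-\<^sup>i\<^sup>t)\<^sup>\<alpha>\<close>, the Fourier multiplier of \<open>\<Delta>\<^sub>h\<^sup>\<alpha>\<close> at \<open>t = k h\<close>.\<close>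
definition frac_diff_multiplier :: "real \<Rightarrow> real \<Rightarrow> real" where
  "frac_diff_multiplier \<alpha> t = (2 * \<bar>sin (t / 2)\<bar>) powr \<alpha>"

definition multiplier_seq :: "real \<Rightarrow> real \<Rightarrow> (int \<Rightarrow> complex) \<Rightarrow> int \<Rightarrow> complex" where
  "multiplier_seq \<alpha> h c k = of_real (frac_diff_multiplier \<alpha> (of_int k * h)) * c k"

lemma frac_diff_multiplier_nonneg: "0 \<le> frac_diff_multiplier \<alpha> t"
  by (simp add: frac_diff_multiplier_def)

lemma frac_diff_multiplier_le_abs_powr: "\<alpha> \<ge> 0 \<Longrightarrow> frac_diff_multiplier \<alpha> t \<le> \<bar>t\<bar> powr \<alpha>"
  unfolding frac_diff_multiplier_def
  by (rule powr_mono2) (use abs_sin_x_le_abs_x[of "t/2"] in auto)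

lemma frac_diff_multiplier_le_two_powr: "\<alpha> \<ge> 0 \<Longrightarrow> frac_diff_multiplier \<alpha> t \<le> 2 powr \<alpha>"
  unfolding frac_diff_multiplier_def by (rule powr_mono2) auto

lemma norm_multiplier_seq:
  "norm (multiplier_seq \<alpha> h c k) = frac_diff_multiplier \<alpha> (of_int k * h) * norm (c k)"
  by (simp add: multiplier_seq_def norm_mult frac_diff_multiplier_nonneg)

context seq_lattice_norm
begin

lemma tail_le: "N (tail_seq n c) \<le> N c"
  by (rule mono) (auto simp: tail_seq_def)

end

lemma sin_one_lt_one: "sin (1::real) < 1"
proof -
  have "sin (1::real) < sin (pi/2)"
    using pi_gt3 by (subst sin_mono_less_eq) auto
  then show ?thesis by simp
qed

lemma sin_one_nonneg: "0 \<le> sin (1::real)"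
  by (rule sin_ge_zero) (use pi_gt3 in auto)

lemma one_minus_sin_one_le_minus_sin:
  fixes x :: real
  assumes x: "1 \<le> x"
  shows "1 - sin 1 \<le> x - sin x"
proof -
  have "(\<lambda>t. t - sin t) 1 \<le> (\<lambda>t. t - sin t) x"
    by (rule DERIV_nonneg_imp_nondecreasing[OF x])
       (auto intro!: derivative_eq_intros exI[of _ "1 - cos _"] simp: cos_le_one)
  then show ?thesis by simp
qed

lemma sin_div_le:
  fixes x :: real
  assumes x: "1 \<le> x"
  shows "sin x / x \<le> 1 - (1 - sin 1) / 2"
proof (cases "x \<le> 2")
  case True
  have "sin x / x \<le> (x - (1 - sin 1)) / x"
    using x one_minus_sin_one_le_minus_sin[OF x] by (simp add: divide_right_mono)
  also have "\<dots> = 1 - (1 - sin 1) / x" using x by (simp add: field_simps)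
  also have "\<dots> \<le> 1 - (1 - sin 1) / 2"
  proof -
    have "(1 - sin 1) / 2 \<le> (1 - sin 1) / x"
      using True x sin_one_lt_one by (intro divide_left_mono) auto
    then show ?thesis by simp
  qed
  finally show ?thesis .
next
  case False
  have "sin x / x \<le> 1 / x" using x by (simp add: divide_right_mono)
  also have "\<dots> \<le> 1 / 2" using False by simp
  also have "\<dots> \<le> 1 - (1 - sin 1) / 2" using sin_one_nonneg by simp
  finally show ?thesis .
qed

lemma sin_sq_has_integral:
  fixes k :: int and b :: real
  assumes k: "k \<noteq> 0" and b: "0 \<le> b"
  shows "((\<lambda>h. sin (k * h / 2) ^ 2) has_integral (b / 2 - sin (k * b) / (2 * k))) {0..b}"
proof -
  define F where "F h = h / 2 - sin (of_int k * h) / (2 * of_int k)" for h :: real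
  have "((\<lambda>h. sin (k * h / 2) ^ 2) has_integral (F b - F 0)) {0..b}"
  proof (rule fundamental_theorem_of_calculus[OF b])
    fix x :: real assume "x \<in> {0..b}"
    have "(F has_real_derivative (1 / 2 - cos (k * x) * k / (2 * k))) (at x within {0..b})"
      unfolding F_def by (auto intro!: derivative_eq_intros)
    moreover have "1 / 2 - cos (k * x) * k / (2 * k) = sin (k * x / 2) ^ 2"
      using cos_double_sin[of "k * x / 2"] k by (simp add: field_simps)
    ultimately show "(F has_vector_derivative sin (k * x / 2) ^ 2) (at x within {0..b})"
      by (simp add: has_real_derivative_iff_has_vector_derivative)
  qed
  then show ?thesis by (simp add: F_def)
qed

lemma integral_sin_sq_ge:
  fixes k :: int and n :: real
  assumes n: "1 \<le> n" and kn: "n \<le> \<bar>k\<bar>"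
  shows "(1 - sin 1) / (4 * n) \<le> integral {0..1/n} (\<lambda>h. sin (k * h / 2) ^ 2)"
proof -
  have k: "k \<noteq> 0" using n kn by auto
  have I: "integral {0..1/n} (\<lambda>h. sin (k * h / 2) ^ 2) = 1/(2*n) - sin (k / n) / (2 * k)"
    using integral_unique[OF sin_sq_has_integral[OF k, of "1/n"]] n by simp
  define x where "x = \<bar>k\<bar> / n"
  have x: "1 \<le> x" using n kn by (simp add: x_def)
  have "sin (k / n) / (2 * k) = (sin x / x) / (2 * n)"
    using n k by (cases "k > 0") (auto simp: x_def field_simps abs_if)
  also have "\<dots> \<le> (1 - (1 - sin 1) / 2) / (2 * n)"
    by (intro divide_right_mono) (use sin_div_le[OF x] n in auto)
  finally have "1/(2*n) - (1 - (1 - sin 1) / 2) / (2 * n) \<le> 1/(2*n) - sin (k / n) / (2 * k)"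
    by simp
  moreover have "1/(2*n) - (1 - (1 - sin 1) / 2) / (2 * n) = (1 - sin 1) / (4 * n)"
    using n by (simp add: field_simps)
  ultimately show ?thesis using I by simp
qed

definition sin_sq_level :: real where "sin_sq_level = (1 - sin 1) / 8"

definition jackson_const :: "real \<Rightarrow> real" where
  "jackson_const \<alpha> = sin_sq_level * (2 * sqrt sin_sq_level) powr \<alpha>"

lemma sin_sq_level_pos: "0 < sin_sq_level" and sin_sq_level_le_one: "sin_sq_level \<le> 1"
  using sin_one_lt_one sin_one_nonneg by (auto simp: sin_sq_level_def)

lemma jackson_const_pos: "0 < jackson_const \<alpha>"
  using sin_sq_level_pos by (simp add: jackson_const_def)

lemma frac_diff_multiplier_ge_level:
  assumes \<alpha>: "\<alpha> \<ge> 0" and level: "sin_sq_level \<le> sin (t / 2) ^ 2"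
  shows "(2 * sqrt sin_sq_level) powr \<alpha> \<le> frac_diff_multiplier \<alpha> t"
proof -
  have "sqrt sin_sq_level \<le> \<bar>sin (t / 2)\<bar>"
    using real_sqrt_le_mono[OF level] by simp
  then show ?thesis unfolding frac_diff_multiplier_def
    using \<alpha> sin_sq_level_pos by (intro powr_mono2) auto
qed

text \<open>The mean of \<open>sin\<^sup>2(k h / 2)\<close> over \<open>[0, 1/n]\<close> is at least \<open>2 sin_sq_level\<close>.\<close>
lemma nn_integral_sin_sq_excess_ge:
  fixes k :: int and n :: nat
  assumes n: "1 \<le> n" and kn: "n \<le> \<bar>k\<bar>"
  shows "ennreal (sin_sq_level / n) \<le>
    (\<integral>\<^sup>+h. ennreal (max 0 (sin (k * h / 2) ^ 2 - sin_sq_level)) * indicator {0..1/n} h \<partial>lborel)"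
proof -
  define g where "g h = sin (k * h / 2) ^ 2" for h :: real
  have g_int: "g integrable_on {0..1/n}" and excess_int: "(\<lambda>h. max 0 (g h - sin_sq_level)) integrable_on {0..1/n}"
    unfolding g_def by (auto intro!: integrable_continuous_interval continuous_intros)
  have "sin_sq_level / n = (1 - sin 1) / (4 * n) - sin_sq_level / n"
    by (simp add: sin_sq_level_def field_simps)
  also have "\<dots> \<le> integral {0..1/n} g - integral {0..1/n} (\<lambda>h. sin_sq_level)"
    using integral_sin_sq_ge[of n k] n kn unfolding g_def by auto
  also have "\<dots> = integral {0..1/n} (\<lambda>h. g h - sin_sq_level)"
    by (rule integral_diff[symmetric]) (use g_int in auto)
  also have "\<dots> \<le> integral {0..1/n} (\<lambda>h. max 0 (g h - sin_sq_level))"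
    by (rule integral_le) (use g_int excess_int in \<open>auto intro: integrable_diff\<close>)
  finally have "ennreal (sin_sq_level / n) \<le> ennreal (integral {0..1/n} (\<lambda>h. max 0 (g h - sin_sq_level)))"
    by (rule ennreal_leI)
  also have "\<dots> = (\<integral>\<^sup>+h. ennreal (max 0 (g h - sin_sq_level)) * indicator {0..1/n} h \<partial>lborel)"
    by (rule nn_integral_has_integral_lebesgue'[symmetric]) (auto intro: integrable_integral excess_int)
  finally show ?thesis by (simp add: g_def)
qed

definition mono_starshaped :: "(real \<Rightarrow> real) \<Rightarrow> bool" where
  "mono_starshaped G \<longleftrightarrow> mono_on {0..} G \<and> G 0 = 0 \<and>
     (\<forall>t u. 0 \<le> t \<longrightarrow> t \<le> 1 \<longrightarrow> 0 \<le> u \<longrightarrow> G (t * u) \<le> t * G u)"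

lemma mono_starshaped_nonneg: "mono_starshaped G \<Longrightarrow> 0 \<le> u \<Longrightarrow> 0 \<le> G u"
  unfolding mono_starshaped_def mono_on_def by (metis atLeast_iff order_refl)

lemma mono_starshaped_mono: "mono_starshaped G \<Longrightarrow> 0 \<le> u \<Longrightarrow> u \<le> v \<Longrightarrow> G u \<le> G v"
  unfolding mono_starshaped_def mono_on_def by (metis atLeast_iff order_trans)

lemma mono_starshaped_scale_le:
  "mono_starshaped G \<Longrightarrow> 0 \<le> t \<Longrightarrow> t \<le> 1 \<Longrightarrow> 0 \<le> u \<Longrightarrow> G (t * u) \<le> t * G u"
  unfolding mono_starshaped_def by blast

lemma borel_measurable_mono_starshaped_comp:
  assumes G: "mono_starshaped G" and f: "f \<in> borel_measurable M" and f_nonneg: "\<And>x. 0 \<le> f x"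
  shows "(\<lambda>x. G (f x)) \<in> borel_measurable M"
proof -
  have "mono (\<lambda>x. G (max 0 x))"
    by (rule monoI) (auto intro: mono_starshaped_mono[OF G])
  then have "(\<lambda>x. G (max 0 x)) \<in> borel_measurable borel" by (rule borel_measurable_mono)
  from measurable_compose[OF f this] show ?thesis using f_nonneg by (simp add: max_absorb2)
qed

lemma sin_sq_excess_mult_le_multiplier:
  assumes G: "mono_starshaped G" and v: "0 \<le> v" and \<alpha>: "0 \<le> \<alpha>"
  shows "ennreal (max 0 (sin (t / 2) ^ 2 - sin_sq_level)) * ennreal (G ((2 * sqrt sin_sq_level) powr \<alpha> * v))
    \<le> ennreal (G (frac_diff_multiplier \<alpha> t * v))"
proof (cases "sin_sq_level \<le> sin (t / 2) ^ 2")
  case True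
  define E where "E = (2 * sqrt sin_sq_level) powr \<alpha>"
  have GE: "0 \<le> G (E * v)" using mono_starshaped_nonneg[OF G] v by (simp add: E_def)
  have "max 0 (sin (t / 2) ^ 2 - sin_sq_level) * G (E * v) \<le> G (E * v)"
    using GE sin_sq_level_pos abs_square_le_1[of "sin (t / 2)"] by (intro mult_left_le_one_le) auto
  also have "\<dots> \<le> G (frac_diff_multiplier \<alpha> t * v)"
    using frac_diff_multiplier_ge_level[OF \<alpha> True] v
    by (intro mono_starshaped_mono[OF G] mult_right_mono) (auto simp: E_def)
  finally show ?thesis unfolding E_def by (metis ennreal_leI ennreal_mult' max.cobounded1)
qed simp

lemma mono_starshaped_le_average_multiplier:
  fixes G :: "real \<Rightarrow> real" and k :: int and n :: nat
  assumes G: "mono_starshaped G" and v: "0 \<le> v" and \<alpha>: "0 \<le> \<alpha>" and n: "1 \<le> n" and kn: "n \<le> \<bar>k\<bar>"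
  shows "ennreal (G (jackson_const \<alpha> * v)) \<le> ennreal n *
    (\<integral>\<^sup>+h. ennreal (G (frac_diff_multiplier \<alpha> (of_int k * h) * v)) * indicator {0..1/n} h \<partial>lborel)"
proof -
  define E where "E = (2 * sqrt sin_sq_level) powr \<alpha>"
  define excess where "excess h = max 0 (sin (k * h / 2) ^ 2 - sin_sq_level)" for h :: real
  have GE: "0 \<le> G (E * v)" using mono_starshaped_nonneg[OF G] v by (simp add: E_def)
  have pointwise: "ennreal (excess h) * ennreal (G (E * v)) \<le>
      ennreal (G (frac_diff_multiplier \<alpha> (of_int k * h) * v))" for h
    unfolding excess_def E_def by (rule sin_sq_excess_mult_le_multiplier[OF G v \<alpha>])
  have excess_meas: "(\<lambda>h. ennreal (excess h) * indicator {0..1/n} h) \<in> borel_measurable lborel"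
    unfolding excess_def by measurable
  have "G (jackson_const \<alpha> * v) \<le> sin_sq_level * G (E * v)"
    using mono_starshaped_scale_le[OF G, of sin_sq_level "E * v"] sin_sq_level_pos sin_sq_level_le_one v
    by (simp add: jackson_const_def E_def mult.assoc)
  then have "ennreal (G (jackson_const \<alpha> * v)) \<le> ennreal n * (ennreal (sin_sq_level / n) * ennreal (G (E * v)))"
    using n sin_sq_level_pos GE
    by (simp add: ennreal_leI mult.assoc[symmetric] flip: ennreal_mult)
  also have "\<dots> \<le> ennreal n *
      ((\<integral>\<^sup>+h. ennreal (excess h) * indicator {0..1/n} h \<partial>lborel) * ennreal (G (E * v)))"
    using nn_integral_sin_sq_excess_ge[OF n kn] unfolding excess_def
    by (intro mult_left_mono mult_right_mono) auto
  also have "\<dots> = ennreal n *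
      (\<integral>\<^sup>+h. ennreal (excess h) * indicator {0..1/n} h * ennreal (G (E * v)) \<partial>lborel)"
    by (simp only: nn_integral_multc[OF excess_meas])
  also have "\<dots> \<le> ennreal n *
      (\<integral>\<^sup>+h. ennreal (G (frac_diff_multiplier \<alpha> (of_int k * h) * v)) * indicator {0..1/n} h \<partial>lborel)"
  proof (intro mult_left_mono nn_integral_mono)
    fix h :: real
    show "ennreal (excess h) * indicator {0..1/n} h * ennreal (G (E * v)) \<le>
        ennreal (G (frac_diff_multiplier \<alpha> (of_int k * h) * v)) * indicator {0..1/n} h"
      using pointwise[of h] by (cases "h \<in> {0..1/n}") (simp_all add: mult_ac)
  qed simp
  finally show ?thesis .
qed

text \<open>The Jackson direction for both norms at once: \<open>G\<^sub>k u\<close> is \<open>M\<^sub>k (u / b)\<close> for the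
  Luxemburg norm and \<open>\<lambda>\<^sub>k u\<close> for the Orlicz norm.\<close>
lemma modular_tail_le_multiplier_bound:
  fixes G :: "int \<Rightarrow> real \<Rightarrow> real" and u :: "int \<Rightarrow> real" and n :: nat and B :: ennreal
  assumes G: "\<And>k. mono_starshaped (G k)" and u: "\<And>k. 0 \<le> u k" and \<alpha>: "0 \<le> \<alpha>" and n: "1 \<le> n"
    and bound: "\<And>h. h \<in> {0..1/n} \<Longrightarrow>
      (\<Sum>\<^sub>\<infinity>k. ennreal (G k (frac_diff_multiplier \<alpha> (of_int k * h) * u k))) \<le> B"
  shows "(\<Sum>\<^sub>\<infinity>k. ennreal (G k (jackson_const \<alpha> * (if n \<le> \<bar>k\<bar> then u k else 0)))) \<le> B"
proof -
  define F where "F k h = ennreal (G k (frac_diff_multiplier \<alpha> (of_int k * h) * u k)) * indicator {0..1/n} h"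
    for k h
  have F_meas: "F k \<in> borel_measurable lborel" for k
    unfolding F_def
    by (intro borel_measurable_times_ennreal measurable_compose[OF _ measurable_ennreal]
              borel_measurable_mono_starshaped_comp[OF G] borel_measurable_indicator)
       (auto simp: frac_diff_multiplier_def u intro!: mult_nonneg_nonneg)
  have "(\<Sum>k\<in>S. ennreal (G k (jackson_const \<alpha> * (if n \<le> \<bar>k\<bar> then u k else 0)))) \<le> B"
    if S: "finite S" for S
  proof -
    have "(\<Sum>k\<in>S. ennreal (G k (jackson_const \<alpha> * (if n \<le> \<bar>k\<bar> then u k else 0)))) \<le>
        (\<Sum>k\<in>S. ennreal n * integral\<^sup>N lborel (F k))"
    proof (intro sum_mono)
      fix k
      show "ennreal (G k (jackson_const \<alpha> * (if n \<le> \<bar>k\<bar> then u k else 0))) \<le> ennreal n * integral\<^sup>N lborel (F k)"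
      proof (cases "n \<le> \<bar>k\<bar>")
        case True
        then show ?thesis unfolding F_def using mono_starshaped_le_average_multiplier[OF G u \<alpha> n] by simp
      next
        case False
        then show ?thesis using G[of k] by (simp add: mono_starshaped_def)
      qed
    qed
    also have "\<dots> = ennreal n * (\<integral>\<^sup>+h. (\<Sum>k\<in>S. F k h) \<partial>lborel)"
      using F_meas by (simp add: nn_integral_sum sum_distrib_left)
    also have "\<dots> \<le> ennreal n * (\<integral>\<^sup>+h. B * indicator {0..1/n} h \<partial>lborel)"
    proof (intro mult_left_mono nn_integral_mono)
      fix h :: real
      have "(\<Sum>k\<in>S. ennreal (G k (frac_diff_multiplier \<alpha> (of_int k * h) * u k))) \<le> B"
        if "h \<in> {0..1/n}"
        using ennreal_sum_le_infsum[OF S] bound[OF that] by (rule order_trans)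
      then show "(\<Sum>k\<in>S. F k h) \<le> B * indicator {0..1/n} h"
        by (cases "h \<in> {0..1/n}") (simp_all add: F_def)
    qed simp
    also have "\<dots> = B" using n by (simp add: nn_integral_cmult ennreal_mult'[symmetric] mult_ac)
    finally show ?thesis .
  qed
  then show ?thesis unfolding ennreal_infsum_le_iff by blast
qed

lemma lux_tail_le_multiplier_bound:
  assumes orl: "\<And>k. orlicz_function (Ms k)" and \<alpha>: "0 \<le> \<alpha>" and n: "1 \<le> n"
    and bound: "\<And>h. h \<in> {0..1/n} \<Longrightarrow> lux_norm Ms (multiplier_seq \<alpha> h c) \<le> A"
  shows "lux_norm Ms (tail_seq n c) \<le> ennreal (1 / jackson_const \<alpha>) * A"
proof (rule ennreal_le_mult_by_upper_bounds)
  fix b assume Ab: "A < ennreal b"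
  then have "0 < ennreal b" by (rule le_less_trans[OF zero_le])
  then have b: "b > 0" by simp
  define G where "G k x = Ms k (x / b)" for k x
  have G: "mono_starshaped (G k)" for k
    unfolding mono_starshaped_def G_def
  proof (intro conjI allI impI)
    show "mono_on {0..} (\<lambda>x. Ms k (x / b))"
      using b by (auto intro!: mono_onI orlicz_function_mono[OF orl] divide_right_mono)
    show "Ms k (0 / b) = 0" using orl[of k] by (simp add: orlicz_function_def)
    fix t u :: real assume "0 \<le> t" "t \<le> 1" "0 \<le> u"
    then show "Ms k (t * u / b) \<le> t * Ms k (u / b)"
      using orlicz_function_scale_le[OF orl, of t "u / b" k] b by simp
  qed
  have "(\<Sum>\<^sub>\<infinity>k. ennreal (G k (jackson_const \<alpha> * (if n \<le> \<bar>k\<bar> then norm (c k) else 0)))) \<le> 1"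
  proof (rule modular_tail_le_multiplier_bound[OF G _ \<alpha> n])
    fix h :: real assume h: "h \<in> {0..1/n}"
    have "lux_norm Ms (multiplier_seq \<alpha> h c) < ennreal b" using bound[OF h] Ab by simp
    then have "lux_admissible Ms (multiplier_seq \<alpha> h c) b" by (rule lux_admissible_if_less[OF orl])
    then show "(\<Sum>\<^sub>\<infinity>k. ennreal (G k (frac_diff_multiplier \<alpha> (of_int k * h) * norm (c k)))) \<le> 1"
      by (simp add: lux_admissible_def G_def norm_multiplier_seq)
  qed simp
  moreover have "norm (tail_seq n c k) / (b / jackson_const \<alpha>) =
      jackson_const \<alpha> * (if n \<le> \<bar>k\<bar> then norm (c k) else 0) / b" for k
    using jackson_const_pos[of \<alpha>] b by (simp add: tail_seq_def field_simps)
  ultimately have "lux_admissible Ms (tail_seq n c) (b / jackson_const \<alpha>)"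
    using b jackson_const_pos[of \<alpha>] by (simp add: lux_admissible_def G_def mult.commute)
  then show "lux_norm Ms (tail_seq n c) \<le> ennreal (1 / jackson_const \<alpha> * b)"
    using lux_norm_le_admissible by simp
qed (use jackson_const_pos in simp)

lemma orlicz_tail_le_multiplier_bound:
  assumes \<alpha>: "0 \<le> \<alpha>" and n: "1 \<le> n"
    and bound: "\<And>h. h \<in> {0..1/n} \<Longrightarrow> orlicz_norm Ms (multiplier_seq \<alpha> h c) \<le> A"
  shows "orlicz_norm Ms (tail_seq n c) \<le> ennreal (1 / jackson_const \<alpha>) * A"
  unfolding orlicz_norm_def
proof (rule SUP_least)
  fix lam assume lam: "lam \<in> Lambda_set Ms"
  then have lam_pos: "lam k > 0" for k by (simp add: Lambda_set_def)
  define G where "G k x = lam k * x" for k x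
  have G: "mono_starshaped (G k)" for k
    unfolding mono_starshaped_def G_def using lam_pos[of k] by (auto intro!: mono_onI mult_left_mono)
  have "(\<Sum>\<^sub>\<infinity>k. ennreal (G k (jackson_const \<alpha> * (if n \<le> \<bar>k\<bar> then norm (c k) else 0)))) \<le> A"
  proof (rule modular_tail_le_multiplier_bound[OF G _ \<alpha> n])
    fix h :: real assume h: "h \<in> {0..1/n}"
    have "(\<Sum>\<^sub>\<infinity>k. ennreal (G k (frac_diff_multiplier \<alpha> (of_int k * h) * norm (c k)))) =
       (\<Sum>\<^sub>\<infinity>k. ennreal (lam k * norm (multiplier_seq \<alpha> h c k)))"
      by (simp add: G_def norm_multiplier_seq)
    also have "\<dots> \<le> orlicz_norm Ms (multiplier_seq \<alpha> h c)"
      unfolding orlicz_norm_def using lam by (rule SUP_upper)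
    finally show "(\<Sum>\<^sub>\<infinity>k. ennreal (G k (frac_diff_multiplier \<alpha> (of_int k * h) * norm (c k)))) \<le> A"
      using bound[OF h] by (rule order_trans)
  qed simp
  moreover have "ennreal (lam k * norm (tail_seq n c k)) = ennreal (1 / jackson_const \<alpha>) *
      ennreal (G k (jackson_const \<alpha> * (if n \<le> \<bar>k\<bar> then norm (c k) else 0)))" for k
    using jackson_const_pos[of \<alpha>] lam_pos[of k]
    by (subst ennreal_mult'[symmetric]) (auto simp: G_def tail_seq_def field_simps)
  ultimately show "(\<Sum>\<^sub>\<infinity>k. ennreal (lam k * norm (tail_seq n c k))) \<le> ennreal (1 / jackson_const \<alpha>) * A"
    by (simp add: ennreal_infsum_cmult mult_left_mono)
qed

locale jackson_norm = seq_lattice_norm +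
  fixes \<alpha> :: real
  assumes tail_le_multiplier_bound: "1 \<le> n \<Longrightarrow>
    (\<And>h. h \<in> {0..1 / real n} \<Longrightarrow> N (multiplier_seq \<alpha> h c) \<le> A) \<Longrightarrow>
    N (tail_seq n c) \<le> ennreal (1 / jackson_const \<alpha>) * A"
begin

lemma tail_bound_if_modulus_bound:
  assumes "\<exists>C. \<forall>\<^sub>F \<delta> in at_right 0. (SUP h\<in>{h. \<bar>h\<bar> \<le> \<delta>}. N (multiplier_seq \<alpha> h c)) \<le> ennreal (C * \<omega> \<delta>)"
  shows "\<exists>C. \<forall>\<^sub>F n in sequentially. N (tail_seq n c) \<le> ennreal (C * \<omega> (1 / real n))"
proof -
  obtain C where C: "\<forall>\<^sub>F \<delta> in at_right 0.
      (SUP h\<in>{h. \<bar>h\<bar> \<le> \<delta>}. N (multiplier_seq \<alpha> h c)) \<le> ennreal (C * \<omega> \<delta>)"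
    using assms by blast
  have "filterlim (\<lambda>n. 1 / real n) (at_right 0) sequentially"
    unfolding inverse_eq_divide[symmetric]
    by (rule filterlim_compose[OF filterlim_inverse_at_right_top filterlim_real_sequentially])
  with C have "\<forall>\<^sub>F n in sequentially.
      (SUP h\<in>{h. \<bar>h\<bar> \<le> 1 / real n}. N (multiplier_seq \<alpha> h c)) \<le> ennreal (C * \<omega> (1 / real n))"
    by (rule eventually_compose_filterlim)
  moreover have "\<forall>\<^sub>F n in sequentially. 1 \<le> n" by (rule eventually_ge_at_top)
  ultimately have "\<forall>\<^sub>F n in sequentially.
      N (tail_seq n c) \<le> ennreal (C / jackson_const \<alpha> * \<omega> (1 / real n))"
  proof eventually_elim
    case (elim n)
    have "N (multiplier_seq \<alpha> h c) \<le> ennreal (C * \<omega> (1 / real n))" if "h \<in> {0..1 / real n}" for h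
    proof -
      have "N (multiplier_seq \<alpha> h c) \<le> (SUP h\<in>{h. \<bar>h\<bar> \<le> 1 / real n}. N (multiplier_seq \<alpha> h c))"
        using that by (intro SUP_upper) auto
      then show ?thesis using elim(1) by (rule order_trans)
    qed
    then have "N (tail_seq n c) \<le> ennreal (1 / jackson_const \<alpha>) * ennreal (C * \<omega> (1 / real n))"
      using elim(2) by (intro tail_le_multiplier_bound)
    then show ?case using jackson_const_pos[of \<alpha>] by (simp add: ennreal_mult'[symmetric])
  qed
  then show ?thesis by blast
qed

end

lemma jackson_norm_lux_norm:
  assumes orl: "\<And>k. orlicz_function (Ms k)" and \<alpha>: "0 \<le> \<alpha>"
  shows "jackson_norm (lux_norm Ms) \<alpha>"
proof -
  interpret seq_lattice_norm "lux_norm Ms" by (rule seq_lattice_norm_lux_norm[OF orl])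
  show ?thesis by unfold_locales (rule lux_tail_le_multiplier_bound[OF orl \<alpha>])
qed

lemma jackson_norm_orlicz_norm:
  assumes \<alpha>: "0 \<le> \<alpha>"
  shows "jackson_norm (orlicz_norm Ms) \<alpha>"
proof -
  interpret seq_lattice_norm "orlicz_norm Ms" by (rule seq_lattice_norm_orlicz_norm)
  show ?thesis by unfold_locales (rule orlicz_tail_le_multiplier_bound[OF \<alpha>])
qed

section \<open>The Bernstein direction\<close>

definition powr_increment :: "real \<Rightarrow> nat \<Rightarrow> real" where
  "powr_increment \<alpha> v = real (Suc v) powr \<alpha> - real v powr \<alpha>"

lemma sum_powr_increment: "(\<Sum>v<m. powr_increment \<alpha> v) = real m powr \<alpha>"
  unfolding powr_increment_def by (subst sum_lessThan_telescope[where f = "\<lambda>v. real v powr \<alpha>"]) simp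

lemma powr_increment_pos: "\<alpha> > 0 \<Longrightarrow> 0 < powr_increment \<alpha> v"
  unfolding powr_increment_def by (simp add: powr_less_mono2)

lemma powr_increment_le:
  assumes \<alpha>: "\<alpha> > 0"
  shows "powr_increment \<alpha> v \<le> max 1 \<alpha> * real (Suc v) powr (\<alpha> - 1)"
proof (cases "v = 0")
  case True
  then show ?thesis by (simp add: powr_increment_def)
next
  case False
  then have v: "real v \<ge> 1" by simp
  show ?thesis
  proof (cases "\<alpha> \<ge> 1")
    case True
    have "\<exists>z. real v < z \<and> z < real (Suc v) \<and>
        real (Suc v) powr \<alpha> - real v powr \<alpha> = (real (Suc v) - real v) * (\<alpha> * z powr (\<alpha> - 1))"
      by (rule MVT2) (use v in \<open>auto intro!: derivative_eq_intros\<close>)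
    then obtain z where z: "real v < z" "z < real (Suc v)"
      and mvt: "real (Suc v) powr \<alpha> - real v powr \<alpha> = \<alpha> * z powr (\<alpha> - 1)" by auto
    have "z powr (\<alpha> - 1) \<le> real (Suc v) powr (\<alpha> - 1)"
      using z v True by (intro powr_mono2) auto
    then show ?thesis using mvt True \<alpha> by (simp add: powr_increment_def)
  next
    case False
    have "real v * real (Suc v) powr (\<alpha> - 1) \<le> real v * real v powr (\<alpha> - 1)"
      using v False by (intro mult_left_mono powr_mono2') auto
    also have "\<dots> = real v powr \<alpha>" using v by (simp add: powr_mult_base)
    finally have "real v * real (Suc v) powr (\<alpha> - 1) \<le> real v powr \<alpha>" .
    moreover have "real (Suc v) powr \<alpha> = real (Suc v) * real (Suc v) powr (\<alpha> - 1)"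
      by (simp add: powr_mult_base)
    ultimately show ?thesis using False unfolding powr_increment_def by (simp add: algebra_simps)
  qed
qed

text \<open>For \<open>|k| < n\<close> the multiplier is at most \<open>\<delta>\<^sup>\<alpha> |k|\<^sup>\<alpha>\<close>, and \<open>|k|\<^sup>\<alpha>\<close> telescopes into the
  increments \<open>(v+1)\<^sup>\<alpha> - v\<^sup>\<alpha>\<close> for \<open>v < |k|\<close>, exactly the \<open>v\<close> whose tails from \<open>v + 1\<close> contain \<open>k\<close>.\<close>
lemma norm_multiplier_seq_le_tails:
  assumes \<alpha>: "\<alpha> > 0" and h: "\<bar>h\<bar> \<le> \<delta>"
  shows "norm (multiplier_seq \<alpha> h c k) \<le>
     (\<Sum>v<n. \<delta> powr \<alpha> * powr_increment \<alpha> v * norm (tail_seq (Suc v) c k)) + 2 powr \<alpha> * norm (tail_seq n c k)"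
proof (cases "n \<le> \<bar>k\<bar>")
  case True
  have "frac_diff_multiplier \<alpha> (of_int k * h) * norm (c k) \<le> 2 powr \<alpha> * norm (c k)"
    using frac_diff_multiplier_le_two_powr \<alpha> by (intro mult_right_mono) auto
  moreover have "0 \<le> (\<Sum>v<n. \<delta> powr \<alpha> * powr_increment \<alpha> v * norm (tail_seq (Suc v) c k))"
    using powr_increment_pos[OF \<alpha>] by (intro sum_nonneg mult_nonneg_nonneg) (auto intro: less_imp_le)
  ultimately show ?thesis using True by (simp add: tail_seq_def norm_multiplier_seq)
next
  case False
  define m where "m = nat \<bar>k\<bar>"
  have "frac_diff_multiplier \<alpha> (of_int k * h) \<le> \<bar>of_int k * h\<bar> powr \<alpha>"
    using \<alpha> by (intro frac_diff_multiplier_le_abs_powr) simp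
  also have "\<dots> \<le> (real m * \<delta>) powr \<alpha>"
    using h \<alpha> by (intro powr_mono2) (auto simp: m_def abs_mult intro!: mult_left_mono)
  also have "\<dots> = \<delta> powr \<alpha> * (\<Sum>v<m. powr_increment \<alpha> v)"
    using h by (simp add: sum_powr_increment powr_mult mult.commute)
  also have "\<dots> = (\<Sum>v<m. \<delta> powr \<alpha> * powr_increment \<alpha> v)"
    by (simp add: sum_distrib_left)
  finally have "frac_diff_multiplier \<alpha> (of_int k * h) * norm (c k) \<le>
      (\<Sum>v<m. \<delta> powr \<alpha> * powr_increment \<alpha> v) * norm (c k)"
    by (rule mult_right_mono) simp
  then have "norm (multiplier_seq \<alpha> h c k) \<le> (\<Sum>v<m. \<delta> powr \<alpha> * powr_increment \<alpha> v * norm (c k))"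
    by (simp add: norm_multiplier_seq sum_distrib_right)
  also have "\<dots> = (\<Sum>v<m. \<delta> powr \<alpha> * powr_increment \<alpha> v * norm (tail_seq (Suc v) c k))"
    by (intro sum.cong) (auto simp: tail_seq_def m_def)
  also have "\<dots> \<le> (\<Sum>v<n. \<delta> powr \<alpha> * powr_increment \<alpha> v * norm (tail_seq (Suc v) c k))"
    using False order.strict_implies_order[OF powr_increment_pos[OF \<alpha>]]
    by (intro sum_mono2) (auto intro!: mult_nonneg_nonneg simp: m_def)
  finally show ?thesis using False by (simp add: tail_seq_def)
qed

context seq_lattice_norm
begin

lemma multiplier_seq_le_tails:
  assumes \<alpha>: "\<alpha> > 0" and h: "\<bar>h\<bar> \<le> \<delta>"
  shows "N (multiplier_seq \<alpha> h c) \<le>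
    (\<Sum>v<n. ennreal (\<delta> powr \<alpha> * powr_increment \<alpha> v) * N (tail_seq (Suc v) c)) +
    ennreal (2 powr \<alpha>) * N (tail_seq n c)"
proof -
  \<comment> \<open>the moduli of the tails, so that the pointwise bound is the modulus of a sequence\<close>
  define t where "t j k = complex_of_real (norm (tail_seq j c k))" for j k
  have N_t: "N (t j) = N (tail_seq j c)" for j
    by (rule cong) (simp add: t_def)
  have w: "0 \<le> \<delta> powr \<alpha> * powr_increment \<alpha> v" for v
    using powr_increment_pos[OF \<alpha>, of v] by simp
  have "N (multiplier_seq \<alpha> h c) \<le>
      N (\<lambda>k. (\<Sum>v<n. of_real (\<delta> powr \<alpha> * powr_increment \<alpha> v) * t (Suc v) k) + of_real (2 powr \<alpha>) * t n k)"
  proof (rule mono)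
    fix k
    have "norm (multiplier_seq \<alpha> h c k) \<le>
        (\<Sum>v<n. \<delta> powr \<alpha> * powr_increment \<alpha> v * norm (tail_seq (Suc v) c k)) + 2 powr \<alpha> * norm (tail_seq n c k)"
      by (rule norm_multiplier_seq_le_tails[OF \<alpha> h])
    also have "\<dots> = norm ((\<Sum>v<n. of_real (\<delta> powr \<alpha> * powr_increment \<alpha> v) * t (Suc v) k) + of_real (2 powr \<alpha>) * t n k)"
      using w by (simp add: t_def sum_nonneg del: of_real_sum flip: of_real_mult of_real_add of_real_sum)
    finally show "norm (multiplier_seq \<alpha> h c k) \<le> \<dots>" .
  qed
  also have "\<dots> \<le> N (\<lambda>k. \<Sum>v<n. of_real (\<delta> powr \<alpha> * powr_increment \<alpha> v) * t (Suc v) k) +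
      N (\<lambda>k. of_real (2 powr \<alpha>) * t n k)"
    by (rule triangle)
  also have "\<dots> \<le> (\<Sum>v<n. ennreal (\<delta> powr \<alpha> * powr_increment \<alpha> v) * N (t (Suc v))) + ennreal (2 powr \<alpha>) * N (t n)"
    using w by (intro add_mono sum_le scale_nonneg_le) auto
  finally show ?thesis unfolding N_t .
qed

end

lemma sum_ennreal_mult_le:
  assumes "\<And>v. v \<in> V \<Longrightarrow> 0 \<le> a v" and "\<And>v. v \<in> V \<Longrightarrow> 0 \<le> b v"
    and "\<And>v. v \<in> V \<Longrightarrow> x v \<le> ennreal (b v)"
  shows "(\<Sum>v\<in>V. ennreal (a v) * x v) \<le> ennreal (\<Sum>v\<in>V. a v * b v)"
proof -
  have "(\<Sum>v\<in>V. ennreal (a v) * x v) \<le> (\<Sum>v\<in>V. ennreal (a v * b v))"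
    using assms by (intro sum_mono) (simp add: ennreal_mult mult_left_mono)
  also have "\<dots> = ennreal (\<Sum>v\<in>V. a v * b v)"
    using assms by (intro sum_ennreal) simp
  finally show ?thesis .
qed

lemma increment_weighted_sum_le:
  fixes \<omega> :: "real \<Rightarrow> real"
  assumes \<alpha>: "\<alpha> > 0" and C: "C \<ge> 0" and K: "K > 0" and \<delta>: "0 < \<delta>" and n: "1 \<le> n" and \<delta>n: "\<delta> * real n \<le> 2"
    and \<omega>_nonneg: "\<And>v. 1 \<le> v \<Longrightarrow> 0 \<le> \<omega> (1 / real v)"
    and B_n: "(\<Sum>v=1..n. real v powr (\<alpha> - 1) * \<omega> (1 / real v)) \<le> K * (real n powr \<alpha> * \<omega> (1 / real n))"
  shows "(\<Sum>v<n. \<delta> powr \<alpha> * powr_increment \<alpha> v * (C * \<omega> (1 / real (Suc v)))) + 2 powr \<alpha> * (C * \<omega> (1 / real n))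
     \<le> (2 powr \<alpha> * max 1 \<alpha> * C * K + 2 powr \<alpha> * C) * \<omega> (1 / real n)"
proof -
  have "(\<Sum>v<n. \<delta> powr \<alpha> * powr_increment \<alpha> v * (C * \<omega> (1 / real (Suc v)))) \<le>
        (\<Sum>v<n. \<delta> powr \<alpha> * (max 1 \<alpha> * real (Suc v) powr (\<alpha> - 1)) * (C * \<omega> (1 / real (Suc v))))"
    by (intro sum_mono mult_right_mono mult_left_mono powr_increment_le[OF \<alpha>] mult_nonneg_nonneg C \<omega>_nonneg)
       auto
  also have "\<dots> = \<delta> powr \<alpha> * max 1 \<alpha> * C * (\<Sum>v=1..n. real v powr (\<alpha> - 1) * \<omega> (1 / real v))"
    by (simp add: sum_distrib_left mult_ac sum.atLeast1_atMost_eq)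
  also have "\<dots> \<le> \<delta> powr \<alpha> * max 1 \<alpha> * C * (K * (real n powr \<alpha> * \<omega> (1 / real n)))"
    by (intro mult_left_mono B_n) (use C in auto)
  also have "\<dots> = (\<delta> * real n) powr \<alpha> * (max 1 \<alpha> * C * K * \<omega> (1 / real n))"
    using \<delta> by (simp add: powr_mult mult_ac)
  also have "\<dots> \<le> 2 powr \<alpha> * (max 1 \<alpha> * C * K * \<omega> (1 / real n))"
    using \<delta> n \<delta>n \<alpha> C K \<omega>_nonneg[OF n] by (intro mult_right_mono powr_mono2 mult_nonneg_nonneg) auto
  finally show ?thesis by (simp add: algebra_simps)
qed

lemma pos_if_mono_on_tendsto_zero:
  fixes \<omega> :: "real \<Rightarrow> real"
  assumes mono: "mono_on {0..1} \<omega>" and lim: "(\<omega> \<longlongrightarrow> 0) (at_right 0)"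
    and nonzero: "\<And>\<delta>. \<delta> \<in> {0<..1} \<Longrightarrow> \<omega> \<delta> \<noteq> 0" and x: "x \<in> {0<..1}"
  shows "\<omega> x > 0"
proof -
  have "eventually (\<lambda>y. \<omega> y \<le> \<omega> x) (at_right 0)"
    unfolding eventually_at_right_field using x
    by (intro exI[of _ x]) (auto intro!: mono_onD[OF mono])
  then have "0 \<le> \<omega> x" by (intro tendsto_upperbound[OF lim]) auto
  then show ?thesis using nonzero[OF x] by linarith
qed

lemma bigo_sequentially_nonnegE:
  fixes f g :: "nat \<Rightarrow> real"
  assumes "f \<in> O(g)" and "\<And>n. 0 \<le> f n" and "\<And>n. 0 \<le> g n"
  obtains K n0 where "K > 0" and "\<And>n. n \<ge> n0 \<Longrightarrow> f n \<le> K * g n"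
proof -
  obtain K where "K > 0" and "\<forall>\<^sub>F n in sequentially. norm (f n) \<le> K * norm (g n)"
    using assms(1) by (elim landau_o.bigE)
  then show ?thesis using that assms(2,3) unfolding eventually_sequentially by auto
qed

lemma nat_ceiling_inverse_bounds:
  fixes \<delta> :: real
  assumes \<delta>: "0 < \<delta>" "\<delta> \<le> 1"
  shows "1 \<le> nat \<lceil>1 / \<delta>\<rceil>" and "1 / \<delta> \<le> nat \<lceil>1 / \<delta>\<rceil>" and "\<delta> * nat \<lceil>1 / \<delta>\<rceil> \<le> 2"
proof -
  have n: "real (nat \<lceil>1 / \<delta>\<rceil>) = of_int \<lceil>1 / \<delta>\<rceil>" using \<delta> by simp
  show ge: "1 / \<delta> \<le> nat \<lceil>1 / \<delta>\<rceil>" unfolding n by simp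
  moreover have "1 \<le> 1 / \<delta>" using \<delta> by simp
  ultimately show "1 \<le> nat \<lceil>1 / \<delta>\<rceil>" by linarith
  have "\<delta> * nat \<lceil>1 / \<delta>\<rceil> \<le> \<delta> * (1 / \<delta> + 1)"
    unfolding n using ceiling_correct[of "1 / \<delta>"] \<delta> by (intro mult_left_mono) auto
  also have "\<dots> = 1 + \<delta>" using \<delta> by (simp add: field_simps)
  finally show "\<delta> * nat \<lceil>1 / \<delta>\<rceil> \<le> 2" using \<delta> by simp
qed

context seq_lattice_norm
begin

lemma tail_bound_everywhere:
  fixes \<omega> :: "real \<Rightarrow> real"
  assumes \<omega>_mono: "mono_on {0..1} \<omega>" and \<omega>_pos: "\<And>x. x \<in> {0<..1} \<Longrightarrow> 0 < \<omega> x"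
    and finite: "N c < \<infinity>"
    and eventual: "\<exists>C. \<forall>\<^sub>F n in sequentially. N (tail_seq n c) \<le> ennreal (C * \<omega> (1 / real n))"
  obtains C where "C \<ge> 0" and "\<And>v. 1 \<le> v \<Longrightarrow> N (tail_seq v c) \<le> ennreal (C * \<omega> (1 / real v))"
proof -
  obtain C0 m where C0: "\<And>v. v \<ge> m \<Longrightarrow> N (tail_seq v c) \<le> ennreal (C0 * \<omega> (1 / real v))"
    using eventual unfolding eventually_sequentially by blast
  define m' where "m' = max m 1"
  obtain A where A: "N c = ennreal A" "A \<ge> 0" using finite by (cases "N c" rule: ennreal_cases) auto
  have \<omega>_m': "\<omega> (1 / real m') > 0" by (rule \<omega>_pos) (auto simp: m'_def)
  define C where "C = max (max C0 0) (A / \<omega> (1 / real m'))"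
  have "N (tail_seq v c) \<le> ennreal (C * \<omega> (1 / real v))" if v: "1 \<le> v" for v
  proof (cases "v \<ge> m'")
    case True
    then have "N (tail_seq v c) \<le> ennreal (C0 * \<omega> (1 / real v))" by (intro C0) (simp add: m'_def)
    also have "\<dots> \<le> ennreal (C * \<omega> (1 / real v))"
      using \<omega>_pos[of "1 / real v"] v by (intro ennreal_leI mult_right_mono) (auto simp: C_def)
    finally show ?thesis .
  next
    case False
    have "A = (A / \<omega> (1 / real m')) * \<omega> (1 / real m')" using \<omega>_m' by simp
    also have "\<dots> \<le> C * \<omega> (1 / real v)"
    proof (intro mult_mono)
      show "\<omega> (1 / real m') \<le> \<omega> (1 / real v)"
        using False v by (intro mono_onD[OF \<omega>_mono]) (auto simp: m'_def frac_le)
    qed (use \<omega>_pos[of "1 / real v"] v \<omega>_m' in \<open>auto simp: C_def\<close>)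
    finally show ?thesis using tail_le[of v c] A by (simp add: order_trans ennreal_leI)
  qed
  then show ?thesis using that[of C] by (simp add: C_def)
qed

lemma multiplier_seq_le_omega:
  fixes \<omega> :: "real \<Rightarrow> real"
  assumes \<alpha>: "\<alpha> > 0" and C: "C \<ge> 0" and K: "K > 0" and h: "\<bar>h\<bar> \<le> \<delta>" and \<delta>: "0 < \<delta>"
    and n: "1 \<le> n" and \<delta>n: "\<delta> * real n \<le> 2"
    and \<omega>_nonneg: "\<And>v. 1 \<le> v \<Longrightarrow> 0 \<le> \<omega> (1 / real v)"
    and tails: "\<And>v. 1 \<le> v \<Longrightarrow> N (tail_seq v c) \<le> ennreal (C * \<omega> (1 / real v))"
    and B_n: "(\<Sum>v=1..n. real v powr (\<alpha> - 1) * \<omega> (1 / real v)) \<le> K * (real n powr \<alpha> * \<omega> (1 / real n))"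
  shows "N (multiplier_seq \<alpha> h c) \<le> ennreal ((2 powr \<alpha> * max 1 \<alpha> * C * K + 2 powr \<alpha> * C) * \<omega> (1 / real n))"
proof -
  have weight_nonneg: "0 \<le> \<delta> powr \<alpha> * powr_increment \<alpha> v" for v
    using powr_increment_pos[OF \<alpha>, of v] by simp
  have bound_nonneg: "0 \<le> C * \<omega> (1 / real (Suc v))" for v
    using C \<omega>_nonneg[of "Suc v"] by simp
  have "N (multiplier_seq \<alpha> h c) \<le>
      (\<Sum>v<n. ennreal (\<delta> powr \<alpha> * powr_increment \<alpha> v) * N (tail_seq (Suc v) c)) +
      ennreal (2 powr \<alpha>) * N (tail_seq n c)"
    by (rule multiplier_seq_le_tails[OF \<alpha> h])
  also have "\<dots> \<le> ennreal (\<Sum>v<n. \<delta> powr \<alpha> * powr_increment \<alpha> v * (C * \<omega> (1 / real (Suc v)))) +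
      ennreal (2 powr \<alpha>) * ennreal (C * \<omega> (1 / real n))"
    by (intro add_mono mult_left_mono sum_ennreal_mult_le[OF weight_nonneg bound_nonneg tails] tails n)
       simp_all
  also have "\<dots> = ennreal ((\<Sum>v<n. \<delta> powr \<alpha> * powr_increment \<alpha> v * (C * \<omega> (1 / real (Suc v)))) +
      2 powr \<alpha> * (C * \<omega> (1 / real n)))"
    using weight_nonneg bound_nonneg C \<omega>_nonneg[OF n]
    by (simp add: ennreal_plus ennreal_mult' sum_nonneg mult_nonneg_nonneg)
  also have "\<dots> \<le> ennreal ((2 powr \<alpha> * max 1 \<alpha> * C * K + 2 powr \<alpha> * C) * \<omega> (1 / real n))"
    by (intro ennreal_leI increment_weighted_sum_le[OF \<alpha> C K \<delta> n \<delta>n \<omega>_nonneg B_n])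
  finally show ?thesis .
qed

lemma modulus_bound_if_tail_bound:
  fixes \<omega> :: "real \<Rightarrow> real"
  assumes \<alpha>: "\<alpha> > 0"
    and \<omega>_mono: "mono_on {0..1} \<omega>" and \<omega>_pos: "\<And>x. x \<in> {0<..1} \<Longrightarrow> 0 < \<omega> x"
    and B_alpha: "(\<lambda>n::nat. \<Sum>v=1..n. real v powr (\<alpha> - 1) * \<omega> (1 / real v))
                    \<in> O(\<lambda>n. real n powr \<alpha> * \<omega> (1 / real n))"
    and finite: "N c < \<infinity>"
    and tail_bound: "\<exists>C. \<forall>\<^sub>F n in sequentially. N (tail_seq n c) \<le> ennreal (C * \<omega> (1 / real n))"
  shows "\<exists>C. \<forall>\<^sub>F \<delta> in at_right 0. (SUP h\<in>{h. \<bar>h\<bar> \<le> \<delta>}. N (multiplier_seq \<alpha> h c)) \<le> ennreal (C * \<omega> \<delta>)"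
proof -
  have \<omega>_nonneg: "0 \<le> \<omega> (1 / real v)" if "1 \<le> v" for v
    using \<omega>_pos[of "1 / real v"] that by simp
  obtain C where C: "C \<ge> 0" and tails: "\<And>v. 1 \<le> v \<Longrightarrow> N (tail_seq v c) \<le> ennreal (C * \<omega> (1 / real v))"
    using tail_bound_everywhere[OF \<omega>_mono \<omega>_pos finite tail_bound] by blast
  have "0 \<le> real n powr \<alpha> * \<omega> (1 / real n)" for n
    using \<omega>_nonneg[of n] by (cases "n = 0") auto
  moreover have "0 \<le> (\<Sum>v=1..n. real v powr (\<alpha> - 1) * \<omega> (1 / real v))" for n
    by (intro sum_nonneg mult_nonneg_nonneg \<omega>_nonneg) auto
  ultimately obtain K n0 where K: "K > 0" and B_n: "\<And>n. n \<ge> n0 \<Longrightarrow>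
      (\<Sum>v=1..n. real v powr (\<alpha> - 1) * \<omega> (1 / real v)) \<le> K * (real n powr \<alpha> * \<omega> (1 / real n))"
    using bigo_sequentially_nonnegE[OF B_alpha] by blast
  define C' where "C' = 2 powr \<alpha> * max 1 \<alpha> * C * K + 2 powr \<alpha> * C"
  have "(SUP h\<in>{h. \<bar>h\<bar> \<le> \<delta>}. N (multiplier_seq \<alpha> h c)) \<le> ennreal (C' * \<omega> \<delta>)"
    if \<delta>: "0 < \<delta>" "\<delta> < 1 / (real n0 + 1)" for \<delta>
  proof (rule SUP_least)
    fix h assume "h \<in> {h. \<bar>h\<bar> \<le> \<delta>}"
    then have h: "\<bar>h\<bar> \<le> \<delta>" by simp
    define n where "n = nat \<lceil>1 / \<delta>\<rceil>"
    have "1 / (real n0 + 1) \<le> 1" by simp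
    then have \<delta>_le_1: "\<delta> \<le> 1" using \<delta> by linarith
    note n = nat_ceiling_inverse_bounds[OF \<delta>(1) \<delta>_le_1, folded n_def]
    have "real n0 + 1 < 1 / \<delta>" using \<delta> by (simp add: field_simps)
    then have "n0 \<le> n" using n(2) by linarith
    have "N (multiplier_seq \<alpha> h c) \<le> ennreal (C' * \<omega> (1 / real n))"
      unfolding C'_def
      by (rule multiplier_seq_le_omega[OF \<alpha> C K h \<delta>(1) n(1) n(3) \<omega>_nonneg tails B_n[OF \<open>n0 \<le> n\<close>]])
    also have "\<dots> \<le> ennreal (C' * \<omega> \<delta>)"
      using C K \<delta> \<delta>_le_1 n \<omega>_pos[of \<delta>] unfolding C'_def
      by (intro ennreal_leI mult_left_mono mono_onD[OF \<omega>_mono]) (auto simp: field_simps)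
    finally show "N (multiplier_seq \<alpha> h c) \<le> ennreal (C' * \<omega> \<delta>)" .
  qed
  then have "\<forall>\<^sub>F \<delta> in at_right 0. (SUP h\<in>{h. \<bar>h\<bar> \<le> \<delta>}. N (multiplier_seq \<alpha> h c)) \<le> ennreal (C' * \<omega> \<delta>)"
    unfolding eventually_at_right_field by (intro exI[of _ "1 / (real n0 + 1)"]) auto
  then show ?thesis by blast
qed

end

section \<open>Fourier coefficients of best approximations and fractional differences\<close>

lemma periodic_add_of_int_mult:
  fixes g :: "real \<Rightarrow> 'a"
  assumes per: "\<And>x. g (x + P) = g x"
  shows "g (x + of_int m * P) = g x"
proof (induction m arbitrary: x rule: int_induct[where k = 0])
  case base
  then show ?case by simp
next
  case (step1 i)
  have "g (x + of_int (i + 1) * P) = g ((x + of_int i * P) + P)" by (simp add: algebra_simps)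
  then show ?case using per step1 by simp
next
  case (step2 i)
  have "g (x + of_int (i - 1) * P) = g ((x - P) + of_int i * P)" by (simp add: algebra_simps)
  also have "\<dots> = g (x - P + P)" using step2 per[of "x - P"] by simp
  finally show ?case by simp
qed

lemma periodic_has_integral_period_interval:
  fixes g :: "real \<Rightarrow> 'a::banach"
  assumes P: "P > 0" and per: "\<And>x. g (x + P) = g x" and I: "(g has_integral I) {0..P}"
  shows "(g has_integral I) {a..a + P}"
proof -
  define m where "m = \<lfloor>a / P\<rfloor>"
  define r where "r = a - of_int m * P"
  have r0: "0 \<le> r" and rP: "r < P"
  proof -
    have "of_int m \<le> a / P" "a / P < of_int m + 1" unfolding m_def by linarith+
    then show "0 \<le> r" "r < P" unfolding r_def using P by (simp_all add: field_simps)
  qed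
  have g_int: "g integrable_on {0..P}" using I by blast
  have I0: "(g has_integral integral {0..r} g) {0..r}"
    by (rule integrable_integral, rule integrable_subinterval_real[OF g_int]) (use rP in auto)
  have I1: "(g has_integral integral {r..P} g) {r..P}"
    by (rule integrable_integral, rule integrable_subinterval_real[OF g_int]) (use r0 in auto)
  have split: "integral {0..r} g + integral {r..P} g = I"
    using has_integral_combine[OF r0 _ I0 I1] rP I by (auto dest: has_integral_unique)
  have "g \<circ> (+) P = g" by (rule ext) (simp add: per add.commute)
  then have "((g \<circ> (+) P) has_integral integral {0..r} g) {0..r}" using I0 by simp
  then have "(g has_integral integral {0..r} g) {0 + P..r + P}"
    by (simp only: has_integral_shift_Icc_real)
  then have I2: "(g has_integral integral {0..r} g) {P..P + r}"
    by (simp add: add.commute)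
  have "(g has_integral (integral {r..P} g + integral {0..r} g)) {r..r + P}"
    using has_integral_combine[OF _ _ I1 I2] r0 rP by (simp add: add.commute)
  then have "(g has_integral I) {r..r + P}" using split by (simp add: add.commute)
  moreover have "g \<circ> (+) (of_int m * P) = g"
    by (rule ext) (simp add: periodic_add_of_int_mult[where g = g, OF per] add.commute)
  ultimately have "((g \<circ> (+) (of_int m * P)) has_integral I) {r..r + P}" by simp
  then have "(g has_integral I) {r + of_int m * P..r + P + of_int m * P}"
    by (simp only: has_integral_shift_Icc_real)
  then show ?thesis by (simp add: r_def algebra_simps)
qed

lemma periodic_has_integral_translate:
  fixes g :: "real \<Rightarrow> 'a::banach"
  assumes P: "P > 0" and per: "\<And>x. g (x + P) = g x" and I: "(g has_integral I) {0..P}"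
  shows "((\<lambda>x. g (x - s)) has_integral I) {0..P}"
proof -
  have "(g has_integral I) {0 + - s..P + - s}"
    using periodic_has_integral_period_interval[OF P per I, of "- s"] by (simp add: algebra_simps)
  then have "((g \<circ> (+) (- s)) has_integral I) {0..P}"
    by (simp only: has_integral_shift_Icc_real)
  then show ?thesis by (simp add: o_def algebra_simps)
qed

lemma cis_int_has_integral:
  fixes j :: int
  shows "((\<lambda>x. cis (of_int j * x)) has_integral (if j = 0 then complex_of_real (2 * pi) else 0)) {0..2*pi}"
proof (cases "j = 0")
  case True
  then show ?thesis using has_integral_const_real[of "1::complex" 0 "2*pi"] by (simp add: scaleR_conv_of_real)
next
  case False
  define F where "F x = cis (of_int j * x) / (\<i> * of_int j)" for x :: real
  have "((\<lambda>x. cis (of_int j * x)) has_integral (F (2*pi) - F 0)) {0..2*pi}"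
  proof (rule fundamental_theorem_of_calculus)
    fix x :: real assume "x \<in> {0..2*pi}"
    have "((\<lambda>x. cis (of_int j * x)) has_derivative (\<lambda>t. (of_int j * t) *\<^sub>R (\<i> * cis (of_int j * x))))
        (at x within {0..2*pi})"
      by (intro has_derivative_cis derivative_eq_intros) auto
    then have "(F has_derivative (\<lambda>t. ((of_int j * t) *\<^sub>R (\<i> * cis (of_int j * x))) / (\<i> * of_int j)))
        (at x within {0..2*pi})"
      unfolding F_def using False by (intro derivative_eq_intros) auto
    moreover have "(\<lambda>t. ((of_int j * t) *\<^sub>R (\<i> * cis (of_int j * x))) / (\<i> * of_int j)) =
        (\<lambda>t. t *\<^sub>R cis (of_int j * x))"
      using False by (auto simp: scaleR_conv_of_real field_simps intro!: ext)
    ultimately show "(F has_vector_derivative cis (of_int j * x)) (at x within {0..2*pi})"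
      by (simp add: has_vector_derivative_def)
  qed auto
  moreover have "cis (of_int j * (2 * pi)) = 1"
    by (simp add: cis_conv_exp exp_eq_1 mult.commute)
  ultimately show ?thesis using False by (simp add: F_def)
qed

lemma Lper_mult_cis_absolutely_integrable:
  assumes f: "f \<in> Lper"
  shows "(\<lambda>x. f x * cis (t * x)) absolutely_integrable_on {0..2*pi}"
proof -
  have "(\<lambda>x. cis (t * x)) \<in> borel_measurable (lebesgue_on {0..2*pi})"
    by (rule continuous_imp_measurable_on_sets_lebesgue) (auto intro!: continuous_intros)
  moreover have "bounded ((\<lambda>x. cis (t * x)) ` {0..2*pi})"
    by (rule boundedI[of _ 1]) auto
  ultimately have "(\<lambda>x. cis (t * x) * f x) absolutely_integrable_on {0..2*pi}"
    using f unfolding Lper_def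
    by (intro absolutely_integrable_bounded_measurable_product[OF bilinear_times]) auto
  then show ?thesis by (simp add: mult.commute)
qed

lemma Lper_mult_cis_integrable:
  "f \<in> Lper \<Longrightarrow> (\<lambda>x. f x * cis (t * x)) integrable_on {0..2*pi}"
  using Lper_mult_cis_absolutely_integrable set_lebesgue_integral_eq_integral(1) by blast

lemma fourier_coeff_trig_poly:
  fixes m :: int
  shows "fourier_coeff (\<lambda>x. \<Sum>j\<in>{-m..m}. a j * cis (of_int j * x)) k = (if \<bar>k\<bar> \<le> m then a k else 0)"
proof -
  have "(\<Sum>j\<in>{-m..m}. a j * cis (of_int j * x)) * cis (- (of_int k * x)) =
        (\<Sum>j\<in>{-m..m}. a j * cis (of_int (j - k) * x))" for x
    unfolding sum_distrib_right mult.assoc by (intro sum.cong refl) (simp add: cis_mult algebra_simps)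
  moreover have "((\<lambda>x. \<Sum>j\<in>{-m..m}. a j * cis (of_int (j - k) * x)) has_integral
        (\<Sum>j\<in>{-m..m}. a j * (if j - k = 0 then complex_of_real (2 * pi) else 0))) {0..2*pi}"
    by (intro has_integral_sum finite_atLeastAtMost_int has_integral_mult_right cis_int_has_integral)
  moreover have "(\<Sum>j\<in>{-m..m}. a j * (if j - k = 0 then complex_of_real (2 * pi) else 0)) =
       (if \<bar>k\<bar> \<le> m then a k * complex_of_real (2 * pi) else 0)"
  proof -
    have "(\<Sum>j\<in>{-m..m}. a j * (if j - k = 0 then complex_of_real (2 * pi) else 0)) =
          (\<Sum>j\<in>{-m..m}. if j = k then a k * complex_of_real (2 * pi) else 0)"
      by (intro sum.cong) auto
    then show ?thesis by (simp add: abs_le_iff)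
  qed
  ultimately show ?thesis by (simp add: fourier_coeff_def integral_unique)
qed

lemma fourier_coeff_diff_trig_poly:
  assumes f: "f \<in> Lper"
  shows "fourier_coeff (\<lambda>x. f x - (\<Sum>j\<in>{-m..m}. a j * cis (of_int j * x))) k =
     fourier_coeff f k - (if \<bar>k\<bar> \<le> m then a k else 0)"
proof -
  let ?t = "\<lambda>x. \<Sum>j\<in>{-m..m}. a j * cis (of_int j * x)"
  have "integral {0..2*pi} (\<lambda>x. (f x - ?t x) * cis (- (of_int k * x))) =
      integral {0..2*pi} (\<lambda>x. f x * cis (- (of_int k * x))) - integral {0..2*pi} (\<lambda>x. ?t x * cis (- (of_int k * x)))"
    unfolding left_diff_distrib
    by (intro integral_diff Lper_mult_cis_integrable[OF f, of "- of_int k", simplified]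
        integrable_continuous_real) (auto intro!: continuous_intros)
  then have "fourier_coeff (\<lambda>x. f x - ?t x) k = fourier_coeff f k - fourier_coeff ?t k"
    by (simp add: fourier_coeff_def right_diff_distrib)
  then show ?thesis by (simp add: fourier_coeff_trig_poly)
qed

context seq_lattice_norm
begin

lemma best_approx_eq_tail:
  assumes f: "f \<in> Lper"
  shows "best_approx N n f = N (tail_seq n (fourier_coeff f))"
proof -
  define m where "m = int n - 1"
  have "fourier_coeff (\<lambda>x. f x - (\<Sum>j\<in>{-m..m}. a j * cis (of_int j * x))) k =
      fourier_coeff f k - (if \<bar>k\<bar> \<le> m then a k else 0)" for a k
    by (rule fourier_coeff_diff_trig_poly[OF f])
  then have lower: "N (tail_seq n (fourier_coeff f)) \<le> N (fourier_coeff (\<lambda>x. f x - t x))"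
    if "t \<in> trig_polys m" for t
    using that unfolding trig_polys_def by (auto intro!: mono simp: tail_seq_def m_def)
  define t0 where "t0 x = (\<Sum>j\<in>{-m..m}. fourier_coeff f j * cis (of_int j * x))" for x
  have t0: "t0 \<in> trig_polys m" unfolding trig_polys_def t0_def by blast
  have "fourier_coeff (\<lambda>x. f x - t0 x) = tail_seq n (fourier_coeff f)"
    unfolding t0_def fourier_coeff_diff_trig_poly[OF f] by (auto simp: tail_seq_def m_def)
  then have "Inf {N (fourier_coeff (\<lambda>x. f x - t x)) | t. t \<in> trig_polys m} = N (tail_seq n (fourier_coeff f))"
    using t0 lower by (intro antisym Inf_lower Inf_greatest) (auto intro!: exI[of _ t0])
  then show ?thesis by (simp add: best_approx_def m_def)
qed

end

lemma Lper_shift_fourier_has_integral: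
  assumes f: "f \<in> Lper"
  shows "((\<lambda>x. f (x - s) * cis (- (of_int k * x))) has_integral
           cis (- (of_int k * s)) * integral {0..2*pi} (\<lambda>x. f x * cis (- (of_int k * x)))) {0..2*pi}"
    and "((\<lambda>x. norm (f (x - s) * cis (- (of_int k * x)))) has_integral
           integral {0..2*pi} (\<lambda>x. norm (f x * cis (- (of_int k * x))))) {0..2*pi}"
proof -
  define g where "g x = f x * cis (- (of_int k * x))" for x
  have "cis (- (of_int k * (x + 2 * pi))) = cis (- (of_int k * x)) * cis (of_int (- k) * (2 * pi))" for x
    by (simp add: cis_mult algebra_simps)
  moreover have "cis (of_int j * (2 * pi)) = 1" for j
    by (simp add: cis_conv_exp exp_eq_1 mult.commute)
  ultimately have "cis (- (of_int k * (x + 2 * pi))) = cis (- (of_int k * x))" for x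
    by (simp only: mult_1_right)
  then have per: "g (x + 2 * pi) = g x" for x
    using f by (simp add: g_def Lper_def)
  have g_abs: "g absolutely_integrable_on {0..2*pi}"
    unfolding g_def using Lper_mult_cis_absolutely_integrable[OF f, of "- of_int k"] by simp
  have shift: "f (x - s) * cis (- (of_int k * x)) = cis (- (of_int k * s)) * g (x - s)" for x
    by (simp add: g_def cis_mult algebra_simps)
  have g_int: "g integrable_on {0..2*pi}" and norm_g_int: "(\<lambda>x. norm (g x)) integrable_on {0..2*pi}"
    using g_abs by (simp_all add: absolutely_integrable_on_def)
  have two_pi: "(0::real) < 2 * pi" by simp
  have "((\<lambda>x. g (x - s)) has_integral integral {0..2*pi} g) {0..2*pi}"
    by (rule periodic_has_integral_translate[OF two_pi per integrable_integral[OF g_int]])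
  then show "((\<lambda>x. f (x - s) * cis (- (of_int k * x))) has_integral
           cis (- (of_int k * s)) * integral {0..2*pi} (\<lambda>x. f x * cis (- (of_int k * x)))) {0..2*pi}"
    unfolding shift by (simp add: g_def[abs_def] has_integral_mult_right)
  have "((\<lambda>x. norm (g (x - s))) has_integral integral {0..2*pi} (\<lambda>x. norm (g x))) {0..2*pi}"
    using per by (intro periodic_has_integral_translate[OF two_pi _ integrable_integral[OF norm_g_int]]) simp
  then show "((\<lambda>x. norm (f (x - s) * cis (- (of_int k * x)))) has_integral
           integral {0..2*pi} (\<lambda>x. norm (f x * cis (- (of_int k * x))))) {0..2*pi}"
    unfolding shift by (simp add: g_def[abs_def] norm_mult)
qed

lemma Lper_shift_fourier_term:
  fixes a :: complex and s :: real and k :: int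
  assumes f: "f \<in> Lper"
  defines "T \<equiv> \<lambda>x. indicator {0..2*pi} x *\<^sub>R (a * (f (x - s) * cis (- (of_int k * x))))"
  shows "integrable lebesgue T"
    and "integral\<^sup>L lebesgue T = a * cis (- (of_int k * s)) * integral {0..2*pi} (\<lambda>x. f x * cis (- (of_int k * x)))"
    and "(\<integral>x. norm (T x) \<partial>lebesgue) = norm a * integral {0..2*pi} (\<lambda>x. norm (f x * cis (- (of_int k * x))))"
proof -
  let ?g = "\<lambda>x. f (x - s) * cis (- (of_int k * x))"
  note I = Lper_shift_fourier_has_integral[OF f, of s k]
  have g: "set_integrable lebesgue {0..2*pi} ?g"
    using I unfolding absolutely_integrable_on_def by blast
  then show "integrable lebesgue T"
    using set_integrable_mult_right[OF g, of a] by (simp add: set_integrable_def T_def)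
  have "integral\<^sup>L lebesgue T = (LINT x:{0..2*pi}|lebesgue. a * ?g x)"
    unfolding T_def set_lebesgue_integral_def by (rule refl)
  also have "\<dots> = a * (LINT x:{0..2*pi}|lebesgue. ?g x)"
    by (rule set_integral_mult_right)
  finally show "integral\<^sup>L lebesgue T =
      a * cis (- (of_int k * s)) * integral {0..2*pi} (\<lambda>x. f x * cis (- (of_int k * x)))"
    using set_lebesgue_integral_eq_integral(2)[OF g] integral_unique[OF I(1)] by (simp add: mult.assoc)
  have "norm (T x) = indicator {0..2*pi} x *\<^sub>R (norm a * norm (?g x))" for x
    by (simp add: T_def norm_mult)
  then have "(\<integral>x. norm (T x) \<partial>lebesgue) = (LINT x:{0..2*pi}|lebesgue. norm a * norm (?g x))"
    unfolding set_lebesgue_integral_def by presburger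
  also have "\<dots> = norm a * (LINT x:{0..2*pi}|lebesgue. norm (?g x))"
    by (rule set_integral_mult_right)
  finally show "(\<integral>x. norm (T x) \<partial>lebesgue) =
      norm a * integral {0..2*pi} (\<lambda>x. norm (f x * cis (- (of_int k * x))))"
    using set_lebesgue_integral_eq_integral(2)[OF set_integrable_norm[OF g]] integral_unique[OF I(2)]
    by simp
qed

lemma borel_measurable_Lper_shift_series:
  assumes f: "f \<in> Lper" and g: "g \<in> borel_measurable borel"
  shows "(\<lambda>x. indicator {0..2*pi} x *\<^sub>R ((\<Sum>j. b j * f (x - s j)) * g x)) \<in> borel_measurable lebesgue"
proof -
  have "(\<lambda>x. indicator {0..2*pi} x *\<^sub>R f (x - s')) \<in> borel_measurable lebesgue" for s'
    using Lper_shift_fourier_term(1)[OF f, of 1 s' 0] by (simp add: borel_measurable_integrable)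
  then have "(\<lambda>x. \<Sum>j. b j * (indicator {0..2*pi} x *\<^sub>R f (x - s j))) \<in> borel_measurable lebesgue"
    by (intro borel_measurable_suminf borel_measurable_times borel_measurable_const)
  moreover have "g \<in> borel_measurable lebesgue" using g by (intro measurable_completion) simp
  ultimately have "(\<lambda>x. (\<Sum>j. b j * (indicator {0..2*pi} x *\<^sub>R f (x - s j))) * g x) \<in> borel_measurable lebesgue"
    by (rule borel_measurable_times)
  moreover have "(\<Sum>j. b j * (indicator {0..2*pi} x *\<^sub>R f (x - s j))) * g x =
      indicator {0..2*pi} x *\<^sub>R ((\<Sum>j. b j * f (x - s j)) * g x)" for x
    by (simp add: indicator_def)
  ultimately show ?thesis by simp
qed

lemma AE_summable_norm_if_summable_integral_norm:
  fixes H :: "nat \<Rightarrow> 'a \<Rightarrow> 'b::{banach, second_countable_topology}"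
  assumes H: "\<And>j. integrable M (H j)" and summable: "summable (\<lambda>j. \<integral>x. norm (H j x) \<partial>M)"
  shows "AE x in M. summable (\<lambda>j. norm (H j x))"
proof -
  have [measurable]: "H j \<in> borel_measurable M" for j using H by (rule borel_measurable_integrable)
  have "(\<integral>\<^sup>+x. (\<Sum>j. ennreal (norm (H j x))) \<partial>M) = (\<Sum>j. \<integral>\<^sup>+x. ennreal (norm (H j x)) \<partial>M)"
    by (rule nn_integral_suminf) measurable
  also have "\<dots> = (\<Sum>j. ennreal (\<integral>x. norm (H j x) \<partial>M))"
    by (intro suminf_cong nn_integral_eq_integral integrable_norm H) auto
  also have "\<dots> = ennreal (\<Sum>j. \<integral>x. norm (H j x) \<partial>M)"
    by (rule suminf_ennreal2[OF _ summable]) auto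
  finally have "(\<integral>\<^sup>+x. (\<Sum>j. ennreal (norm (H j x))) \<partial>M) \<noteq> \<infinity>" by simp
  then have "AE x in M. (\<Sum>j. ennreal (norm (H j x))) \<noteq> \<infinity>"
    by (rule nn_integral_PInf_AE[rotated]) measurable
  then show ?thesis by eventually_elim (auto intro: summable_suminf_not_top)
qed

lemma has_bochner_integral_suminf:
  fixes H :: "nat \<Rightarrow> 'a \<Rightarrow> 'b::{banach, second_countable_topology}"
  assumes H: "\<And>j. integrable M (H j)" and summable: "summable (\<lambda>j. \<integral>x. norm (H j x) \<partial>M)"
    and F: "F \<in> borel_measurable M"
    and F_eq: "\<And>x. summable (\<lambda>j. norm (H j x)) \<Longrightarrow> F x = (\<Sum>j. H j x)"
  shows "has_bochner_integral M F (\<Sum>j. integral\<^sup>L M (H j))"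
proof -
  note AE_summable = AE_summable_norm_if_summable_integral_norm[OF H summable]
  note sum_int = integrable_suminf[OF H AE_summable summable]
  have AE_eq: "AE x in M. (\<Sum>j. H j x) = F x"
    using AE_summable by eventually_elim (simp add: F_eq)
  have "integrable M F" by (rule integrable_cong_AE_imp[OF sum_int F AE_eq])
  moreover have "integral\<^sup>L M F = (\<integral>x. (\<Sum>j. H j x) \<partial>M)"
    using AE_eq by (intro integral_cong_AE[OF F borel_measurable_integrable[OF sum_int]]) (auto elim: AE_mp)
  ultimately show ?thesis
    by (simp add: has_bochner_integral_iff integral_suminf[OF H AE_summable summable])
qed

text \<open>The series \<open>\<Sum>j. b j * f (x - s j)\<close> may diverge at some \<open>x\<close>, where \<open>suminf\<close> is a junk
  value; it converges absolutely almost everywhere, which is all the integral sees.\<close>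
lemma fourier_coeff_shift_series:
  fixes b :: "nat \<Rightarrow> complex" and s :: "nat \<Rightarrow> real"
  assumes f: "f \<in> Lper" and b: "summable (\<lambda>j. norm (b j))"
  shows "fourier_coeff (\<lambda>x. \<Sum>j. b j * f (x - s j)) k =
    (\<Sum>j. b j * cis (- (of_int k * s j))) * fourier_coeff f k"
proof -
  define S where "S = {0..2*pi}"
  define e where "e x = cis (- (of_int k * x))" for x
  define I where "I = integral S (\<lambda>x. f x * e x)"
  define I_norm where "I_norm = integral S (\<lambda>x. norm (f x * e x))"
  define H where "H j x = indicator S x *\<^sub>R (b j * (f (x - s j) * e x))" for j x
  define F where "F x = indicator S x *\<^sub>R ((\<Sum>j. b j * f (x - s j)) * e x)" for x
  have H_int: "integrable lebesgue (H j)"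
    and H_integral: "integral\<^sup>L lebesgue (H j) = b j * cis (- (of_int k * s j)) * I"
    and H_norm_integral: "(\<integral>x. norm (H j x) \<partial>lebesgue) = norm (b j) * I_norm" for j
    unfolding H_def[abs_def] S_def e_def I_def I_norm_def by (rule Lper_shift_fourier_term[OF f])+
  have summable_H: "summable (\<lambda>j. \<integral>x. norm (H j x) \<partial>lebesgue)"
    unfolding H_norm_integral by (rule summable_mult2[OF b])
  have F_meas: "F \<in> borel_measurable lebesgue"
    unfolding F_def[abs_def] S_def e_def
    by (intro borel_measurable_Lper_shift_series[OF f] borel_measurable_continuous_onI continuous_intros)
  have F_eq: "F x = (\<Sum>j. H j x)" if summable: "summable (\<lambda>j. norm (H j x))" for x
  proof (cases "x \<in> S")
    case True
    have "norm (H j x) = norm (b j * f (x - s j))" for j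
      using True by (simp add: H_def e_def norm_mult)
    then have "summable (\<lambda>j. b j * f (x - s j))"
      using summable by (simp only: summable_norm_cancel)
    then have "(\<Sum>j. b j * f (x - s j)) * e x = (\<Sum>j. b j * f (x - s j) * e x)"
      by (rule suminf_mult2)
    then show ?thesis using True by (simp add: F_def H_def mult.assoc)
  qed (simp add: F_def H_def)
  have "has_bochner_integral lebesgue F (\<Sum>j. b j * cis (- (of_int k * s j)) * I)"
    using has_bochner_integral_suminf[OF H_int summable_H F_meas F_eq] by (simp only: H_integral)
  then have F_int: "integrable lebesgue F"
    and F_integral: "integral\<^sup>L lebesgue F = (\<Sum>j. b j * cis (- (of_int k * s j)) * I)"
    by (simp_all only: has_bochner_integral_iff)
  have "set_integrable lebesgue S (\<lambda>x. (\<Sum>j. b j * f (x - s j)) * e x)"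
    using F_int unfolding set_integrable_def F_def[abs_def] .
  then have "integral S (\<lambda>x. (\<Sum>j. b j * f (x - s j)) * e x) =
      (LINT x:S|lebesgue. (\<Sum>j. b j * f (x - s j)) * e x)"
    by (rule set_lebesgue_integral_eq_integral(2)[symmetric])
  also have "\<dots> = integral\<^sup>L lebesgue F"
    unfolding set_lebesgue_integral_def F_def[abs_def] by (rule refl)
  also have "\<dots> = (\<Sum>j. b j * cis (- (of_int k * s j)) * I)"
    by (rule F_integral)
  also have "\<dots> = (\<Sum>j. b j * cis (- (of_int k * s j))) * I"
    using b by (intro suminf_mult2[symmetric]) (rule summable_norm_cancel, simp add: norm_mult)
  finally show ?thesis by (simp add: fourier_coeff_def S_def e_def I_def mult_ac)
qed

lemma summable_abs_gbinomial:
  fixes \<alpha> :: real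
  assumes \<alpha>: "\<alpha> > 0"
  shows "summable (\<lambda>j. \<bar>\<alpha> gchoose j\<bar>)"
proof -
  define \<beta> where "\<beta> j = \<bar>\<alpha> gchoose j\<bar>" for j
  define J where "J = nat \<lceil>\<alpha>\<rceil>"
  have step: "real (Suc j) * \<beta> (Suc j) = real j * \<beta> j - \<alpha> * \<beta> j" if "j \<ge> J" for j
  proof -
    have ratio: "real (Suc j) * (\<alpha> gchoose Suc j) = (\<alpha> - real j) * (\<alpha> gchoose j)"
      using gbinomial_absorption[of j \<alpha>] gbinomial_absorb_comp[of \<alpha> j] by simp
    have "real (Suc j) * \<beta> (Suc j) = \<bar>real (Suc j) * (\<alpha> gchoose Suc j)\<bar>"
      by (simp add: \<beta>_def abs_mult)
    also have "\<dots> = \<bar>\<alpha> - real j\<bar> * \<beta> j" by (simp only: ratio abs_mult \<beta>_def)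
    also have "\<bar>\<alpha> - real j\<bar> = real j - \<alpha>" using that by (simp add: J_def)
    finally show ?thesis by (simp add: algebra_simps)
  qed
  have telescope: "\<alpha> * (\<Sum>j\<in>{J..<J+i}. \<beta> j) + real (J + i) * \<beta> (J + i) = real J * \<beta> J" for i
  proof (induction i)
    case (Suc i)
    have "real (J + Suc i) * \<beta> (J + Suc i) = real (J + i) * \<beta> (J + i) - \<alpha> * \<beta> (J + i)"
      using step[of "J + i"] by simp
    then show ?case using Suc by (simp add: algebra_simps)
  qed simp
  show ?thesis unfolding \<beta>_def[symmetric]
  proof (rule bounded_imp_summable)
    show "0 \<le> \<beta> j" for j by (simp add: \<beta>_def)
    fix m
    have "0 \<le> real (J + Suc m) * \<beta> (J + Suc m)" by (simp add: \<beta>_def)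
    then have tail: "\<alpha> * (\<Sum>j\<in>{J..<J+Suc m}. \<beta> j) \<le> real J * \<beta> J"
      using telescope[of "Suc m"] by linarith
    have "(\<Sum>j\<le>m. \<beta> j) \<le> (\<Sum>j\<in>{..<J} \<union> {J..<J+Suc m}. \<beta> j)"
      by (intro sum_mono2) (auto simp: \<beta>_def)
    also have "\<dots> = (\<Sum>j<J. \<beta> j) + (\<Sum>j\<in>{J..<J+Suc m}. \<beta> j)"
      by (rule sum.union_disjoint) auto
    also have "\<dots> \<le> (\<Sum>j<J. \<beta> j) + real J * \<beta> J / \<alpha>"
      using tail \<alpha> by (simp add: field_simps)
    finally show "(\<Sum>j\<le>m. \<beta> j) \<le> (\<Sum>j<J. \<beta> j) + real J * \<beta> J / \<alpha>" .
  qed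
qed

lemma gen_binomial_real_sums:
  fixes w :: complex
  assumes "norm w < 1"
  shows "(\<lambda>j. complex_of_real ((-1) ^ j * (\<alpha> gchoose j)) * w ^ j) sums ((1 - w) powr complex_of_real \<alpha>)"
proof -
  have "(\<lambda>j. (complex_of_real \<alpha> gchoose j) * (- w) ^ j) sums (1 + - w) powr complex_of_real \<alpha>"
    using assms by (intro gen_binomial_complex) simp
  moreover have "complex_of_real \<alpha> gchoose j = complex_of_real (\<alpha> gchoose j)" for j
    by (simp add: gbinomial_prod_rev)
  ultimately show ?thesis by (simp add: power_minus' mult_ac)
qed

text \<open>Abel's theorem: the binomial series converges absolutely on the closed unit disc, so its sum
  at \<open>z\<close> is the limit of its sums \<open>(1 - r z)\<^sup>\<alpha>\<close> at \<open>r z\<close> as \<open>r \<rightarrow> 1\<^sup>-\<close>.\<close>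
lemma norm_gen_binomial_on_circle:
  fixes z :: complex
  assumes \<alpha>: "\<alpha> > 0" and z: "norm z = 1"
  shows "norm (\<Sum>j. complex_of_real ((-1) ^ j * (\<alpha> gchoose j)) * z ^ j) = norm (1 - z) powr \<alpha>"
proof -
  define Q where "Q r = (\<Sum>j. complex_of_real ((-1) ^ j * (\<alpha> gchoose j)) * (complex_of_real r * z) ^ j)"
    for r :: real
  have "uniform_limit {0..1}
      (\<lambda>n r. \<Sum>j<n. complex_of_real ((-1) ^ j * (\<alpha> gchoose j)) * (complex_of_real r * z) ^ j) Q sequentially"
    unfolding Q_def
  proof (rule Weierstrass_m_test[OF _ summable_abs_gbinomial[OF \<alpha>]])
    fix n and r :: real assume "r \<in> {0..1}"
    then have "norm ((complex_of_real r * z) ^ n) \<le> 1"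
      using z by (simp add: norm_mult norm_power power_le_one)
    then show "norm (complex_of_real ((-1) ^ n * (\<alpha> gchoose n)) * (complex_of_real r * z) ^ n) \<le> \<bar>\<alpha> gchoose n\<bar>"
      by (simp add: norm_mult norm_power abs_mult mult_left_le)
  qed
  then have "continuous_on {0..1} Q"
    by (rule uniform_limit_theorem[rotated]) (auto intro!: always_eventually continuous_intros)
  then have "(Q \<longlongrightarrow> Q 1) (at 1 within {0..1})"
    by (simp add: continuous_on_def)
  then have "(Q \<longlongrightarrow> Q 1) (at_left 1)"
    by (simp add: at_within_Icc_at_left)
  then have lim_Q: "((\<lambda>r. norm (Q r)) \<longlongrightarrow> norm (Q 1)) (at_left 1)"
    by (rule tendsto_norm)
  have "eventually (\<lambda>r. norm (Q r) = norm (1 - complex_of_real r * z) powr \<alpha>) (at_left 1)"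
  proof (rule eventually_mono[OF eventually_at_leftI[of 0]])
    fix r :: real assume r: "r \<in> {0<..<1}"
    then have "norm (complex_of_real r * z) < 1" using z by (simp add: norm_mult)
    from gen_binomial_real_sums[OF this, of \<alpha>] show "norm (Q r) = norm (1 - complex_of_real r * z) powr \<alpha>"
      unfolding Q_def by (simp add: sums_iff norm_powr_real_powr')
  qed simp
  with lim_Q have lim1: "((\<lambda>r. norm (1 - complex_of_real r * z) powr \<alpha>) \<longlongrightarrow> norm (Q 1)) (at_left 1)"
    by (rule Lim_transform_eventually)
  have lim2: "((\<lambda>r. norm (1 - complex_of_real r * z) powr \<alpha>) \<longlongrightarrow> norm (1 - z) powr \<alpha>) (at_left 1)"
  proof (rule tendsto_powr')
    have "((\<lambda>r. norm (1 - complex_of_real r * z)) \<longlongrightarrow> norm (1 - complex_of_real 1 * z)) (at_left 1)"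
      by (intro tendsto_intros)
    then show "((\<lambda>r. norm (1 - complex_of_real r * z)) \<longlongrightarrow> norm (1 - z)) (at_left 1)" by simp
  qed (use \<alpha> in auto)
  have "norm (Q 1) = norm (1 - z) powr \<alpha>"
    using tendsto_unique[OF _ lim1 lim2] by simp
  then show ?thesis by (simp add: Q_def)
qed

lemma norm_one_minus_cis: "norm (1 - cis t) = 2 * \<bar>sin (t / 2)\<bar>"
proof -
  have "(norm (1 - cis t))\<^sup>2 = (1 - cos t)\<^sup>2 + (sin t)\<^sup>2"
    by (simp add: cmod_def)
  also have "\<dots> = 2 - 2 * cos t"
    using sin_cos_squared_add[of t] by (simp add: power2_eq_square algebra_simps)
  also have "\<dots> = (2 * \<bar>sin (t / 2)\<bar>)\<^sup>2"
    using cos_double_sin[of "t/2"] by (simp add: power2_eq_square)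
  finally show ?thesis by (rule power2_eq_imp_eq) auto
qed

lemma norm_fourier_coeff_frac_diff:
  assumes f: "f \<in> Lper" and \<alpha>: "\<alpha> > 0"
  shows "norm (fourier_coeff (frac_diff \<alpha> h f) k) =
    frac_diff_multiplier \<alpha> (of_int k * h) * norm (fourier_coeff f k)"
proof -
  let ?b = "\<lambda>j. complex_of_real ((-1) ^ j * (\<alpha> gchoose j))"
  have b: "summable (\<lambda>j. norm (?b j))"
    using summable_abs_gbinomial[OF \<alpha>] by (simp add: norm_mult norm_power abs_mult)
  have power: "cis (- (of_int k * (real j * h))) = cis (- (of_int k * h)) ^ j" for j
    by (simp add: Complex.DeMoivre mult_ac)
  have "fourier_coeff (frac_diff \<alpha> h f) k = (\<Sum>j. ?b j * cis (- (of_int k * h)) ^ j) * fourier_coeff f k"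
    unfolding frac_diff_def fourier_coeff_shift_series[OF f b] power ..
  moreover have "norm (\<Sum>j. ?b j * cis (- (of_int k * h)) ^ j) = frac_diff_multiplier \<alpha> (of_int k * h)"
    using norm_gen_binomial_on_circle[OF \<alpha>, of "cis (- (of_int k * h))"]
    by (simp add: norm_one_minus_cis frac_diff_multiplier_def)
  ultimately show ?thesis by (simp add: norm_mult)
qed

lemma (in seq_lattice_norm) modulus_smooth_eq_sup_multiplier:
  assumes f: "f \<in> Lper" and \<alpha>: "\<alpha> > 0"
  shows "modulus_smooth N \<alpha> f \<delta> = (SUP h\<in>{h. \<bar>h\<bar> \<le> \<delta>}. N (multiplier_seq \<alpha> h (fourier_coeff f)))"
  unfolding modulus_smooth_def
  by (intro SUP_cong refl cong) (simp add: norm_fourier_coeff_frac_diff[OF f \<alpha>] norm_multiplier_seq)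

theorem theorem4:
  fixes \<alpha> :: real and \<omega> :: "real \<Rightarrow> real" and Ms :: "int \<Rightarrow> real \<Rightarrow> real"
    and N :: "(int \<Rightarrow> complex) \<Rightarrow> ennreal" and f :: "real \<Rightarrow> complex"
  assumes alpha_pos: "\<alpha> > 0"
    and orlicz: "\<And>k. orlicz_function (Ms k)"
    and om_cont: "continuous_on {0..1} \<omega>"
    and om_mono: "mono_on {0..1} \<omega>"
    and om_nz: "\<And>\<delta>. \<delta> \<in> {0<..1} \<Longrightarrow> \<omega> \<delta> \<noteq> 0"
    and om_lim: "(\<omega> \<longlongrightarrow> 0) (at_right 0)"
    and B_alpha: "(\<lambda>n::nat. \<Sum>v=1..n. real v powr (\<alpha> - 1) * \<omega> (1 / real v))
                    \<in> O(\<lambda>n. real n powr \<alpha> * \<omega> (1 / real n))"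
    and norm_choice: "N = lux_norm Ms \<or> N = orlicz_norm Ms"
    and f_in: "f \<in> S_M Ms"
  shows "(\<exists>C. \<forall>\<^sub>F \<delta> in at_right 0. modulus_smooth N \<alpha> f \<delta> \<le> ennreal (C * \<omega> \<delta>))
     \<longleftrightarrow> (\<exists>C. \<forall>\<^sub>F n in sequentially. best_approx N n f \<le> ennreal (C * \<omega> (1 / real n)))"
proof -
  have f: "f \<in> Lper" and lux_finite: "lux_norm Ms (fourier_coeff f) < \<infinity>"
    using f_in by (simp_all add: S_M_def)
  interpret jackson_norm N \<alpha>
    using norm_choice jackson_norm_lux_norm[OF orlicz] jackson_norm_orlicz_norm alpha_pos by auto
  have finite: "N (fourier_coeff f) < \<infinity>"
  proof (cases "N = lux_norm Ms")
    case False
    then have "N (fourier_coeff f) \<le> ennreal 2 * lux_norm Ms (fourier_coeff f)"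
      using norm_choice orlicz_norm_le_lux_norm[of Ms, OF orlicz] by simp
    also have "\<dots> < \<infinity>" using lux_finite by (simp add: ennreal_mult_less_top)
    finally show ?thesis .
  qed (use lux_finite in simp)
  have \<omega>_pos: "0 < \<omega> x" if "x \<in> {0<..1}" for x
    by (rule pos_if_mono_on_tendsto_zero[OF om_mono om_lim om_nz that])
  show ?thesis
    unfolding modulus_smooth_eq_sup_multiplier[OF f alpha_pos] best_approx_eq_tail[OF f]
    using tail_bound_if_modulus_bound modulus_bound_if_tail_bound[OF alpha_pos om_mono \<omega>_pos B_alpha finite]
    by blast
qed

end
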